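(* Let $-3<\gamma\le1$, $l\ge1$, $m,\beta\in\mathbb{R}$, $A>0$, $\vartheta>0$. Then, for sufficiently small $\hbar,\delta>0$, there is a constant $C>0$, independent of $l,\delta,\hbar,A$, such that for all functions $f$ on $[0,A]\times\mathbb{R}^3$: (1) $\|Y_A(f)\|_{L^\infty_{x,v}}\le C\|f(A,\cdot)\|_{L^\infty_v}$; (2) $\|Z(f)\|_{L^\infty_{x,v}}\le C\|\nu^{-1}f\|_{L^\infty_{x,v}}$; (3) $\|U(f)\|_{L^\infty_{x,v}}\le C\|\nu^{-1}f\|_{L^\infty_{x,v}}$, where $L^\infty_{x,v}$ norms are taken over $(x,v)\in(0,A)\times\mathbb{R}^3$.
   Context: Fix $\rho,T>0$, $\bar u=(\bar u_1,\bar u_2,0)$, $\mathcal M(v)=\frac{\rho}{(2\pi T)^{3/2}}e^{-|v-\bar u|^2/(2T)}$, $\nu(v)=\int_{\mathbb{R}^3}|v_*-v|^\gamma\mathcal M(v_* )dv_*$. Fix $T_w$ with $0<T_w<2T$, $u_w\in\mathbb{R}^3$ with $u_{w,3}=0$, $M_w(v)=\sqrt{2\pi/T_w}\,(2\pi T_w)^{-3/2}e^{-|v-u_w|^2/(2T_w)}$, $\alpha_*\in[0,1]$, $R_0v=(v_1,v_2,-v_3)$. $\Upsilon:[0,\infty)\to[0,1]$ smooth monotone with $\Upsilon=1$ on $[0,1]$, $\Upsilon=0$ on $[2,\infty)$; $\sigma(x,v)=5(\delta x+l)^{\frac2{3-\gamma}}[1-\Upsilon(\frac{\delta x+l}{(1+|v-\bar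 u|)^{3-\gamma}})]+(\frac{\delta x+l}{(1+|v-\bar u|)^{1-\gamma}}+3|v-\bar u|^2)\Upsilon(\frac{\delta x+l}{(1+|v-\bar u|)^{3-\gamma}})$, $\sigma_x=\partial_x\sigma$, $\sigma_{xx}=\partial_x^2\sigma$. Define $\kappa(x,v)=\int_0^x\big[-\frac{m\sigma_{xx}(y,v)}{2\sigma_x(y,v)}-\hbar\sigma_x(y,v)+\frac{\nu(v)}{v_3}\big]dy$ and $\mathcal M_\sigma(v)=\mathcal M(v)e^{-2\hbar\sigma(0,v)}$. For $0<x<A$: $Y_A(f)(x,v)=(1-\alpha_* )e^{\kappa(A,R_0v)-\kappa(x,v)}f(A,R_0v)+\alpha_*\frac{M_w(v)}{\sqrt{\mathcal M_\sigma(v)}}\int_{v_3'<0}(-v_3')\frac{\sigma_x^{m/2}(0,v)}{\sigma_x^{m/2}(0,v')}e^{\kappa(A,v')-\kappa(x,v)}f(A,v')\sqrt{\mathcal M_\sigma(v')}dv'$ if $v_3>0$, and $Y_A(f)=e^{\kappa(A,v)-\kappa(x,v)}f(A,v)$ if $v_3<0$; $Z(f)(x,v)=(1-\alpha_* )\int_0^Ae^{-[\kappa(x,v)-\kappa(x',R_0v)]}\frac1{v_3}f(x',R_0v)dx'-\alpha_*\frac{M_w(v)}{\sqrt{\mathcal M_\sigma(v)}}\int_{v_3'<0}\int_0^A(-v_3')\frac{\sigma_x^{m/2}(0,v)}{\sigma_x^{m/2}(0,v')}e^{-[\kappa(x,v)-\kappa(x',v')]}\frac1{v_3'}f(x',v')\sqrt{\mathcal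 M_\sigma(v')}dx'dv'$ if $v_3>0$, and $Z(f)=0$ if $v_3<0$; $U(f)(x,v)=\int_0^xe^{-[\kappa(x,v)-\kappa(x',v)]}\frac1{v_3}f(x',v)dx'$ if $v_3>0$, and $U(f)=-\int_x^Ae^{-[\kappa(x,v)-\kappa(x',v)]}\frac1{v_3}f(x',v)dx'$ if $v_3<0$. *)

theory Defs
  imports "HOL-Analysis.Analysis"
begin

definition Maxw :: "real \<Rightarrow> real \<Rightarrow> real^3 \<Rightarrow> real^3 \<Rightarrow> real" where
  "Maxw rho T ub v = rho / (2 * pi * T) powr (3/2) * exp (- (norm (v - ub))\<^sup>2 / (2 * T))"

definition nuf :: "real \<Rightarrow> real \<Rightarrow> real \<Rightarrow> real^3 \<Rightarrow> real^3 \<Rightarrow> real" where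
  "nuf gam rho T ub v = (\<integral>w. norm (w - v) powr gam * Maxw rho T ub w \<partial>lborel)"

definition Mwall :: "real \<Rightarrow> real^3 \<Rightarrow> real^3 \<Rightarrow> real" where
  "Mwall Tw uw v = sqrt (2 * pi / Tw) * (2 * pi * Tw) powr (-3/2) * exp (- (norm (v - uw))\<^sup>2 / (2 * Tw))"

definition R0 :: "real^3 \<Rightarrow> real^3" where
  "R0 v = (\<chi> i. if i = 3 then - (v $ i) else v $ i)"

(* Upsilon : [0,oo) -> [0,1] smooth, monotone, =1 on [0,1], =0 on [2,oo).
   Smoothness is expressed on all of R (any such function extends smoothly by 1 to (-oo,0)). *)
definition cutoff :: "(real \<Rightarrow> real) \<Rightarrow> bool" where
  "cutoff Ups \<longleftrightarrow>
     (\<forall>k x. ((deriv ^^ k) Ups) differentiable (at x)) \<and>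
     (\<forall>s\<ge>0. 0 \<le> Ups s \<and> Ups s \<le> 1) \<and>
     antimono_on {0..} Ups \<and>
     (\<forall>s\<in>{0..1}. Ups s = 1) \<and>
     (\<forall>s\<ge>2. Ups s = 0)"

definition sigmaf :: "real \<Rightarrow> (real \<Rightarrow> real) \<Rightarrow> real \<Rightarrow> real \<Rightarrow> real^3 \<Rightarrow> real \<Rightarrow> real^3 \<Rightarrow> real" where
  "sigmaf gam Ups delta l ub x v =
     5 * (delta * x + l) powr (2 / (3 - gam))
       * (1 - Ups ((delta * x + l) / (1 + norm (v - ub)) powr (3 - gam)))
     + ((delta * x + l) / (1 + norm (v - ub)) powr (1 - gam) + 3 * (norm (v - ub))\<^sup>2)
       * Ups ((delta * x + l) / (1 + norm (v - ub)) powr (3 - gam))"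

definition sigmax :: "real \<Rightarrow> (real \<Rightarrow> real) \<Rightarrow> real \<Rightarrow> real \<Rightarrow> real^3 \<Rightarrow> real \<Rightarrow> real^3 \<Rightarrow> real" where
  "sigmax gam Ups delta l ub x v = deriv (\<lambda>y. sigmaf gam Ups delta l ub y v) x"

definition sigmaxx :: "real \<Rightarrow> (real \<Rightarrow> real) \<Rightarrow> real \<Rightarrow> real \<Rightarrow> real^3 \<Rightarrow> real \<Rightarrow> real^3 \<Rightarrow> real" where
  "sigmaxx gam Ups delta l ub x v = deriv (\<lambda>y. sigmax gam Ups delta l ub y v) x"

definition kappa :: "real \<Rightarrow> real \<Rightarrow> real \<Rightarrow> (real \<Rightarrow> real) \<Rightarrow> real \<Rightarrow> real
     \<Rightarrow> real \<Rightarrow> real \<Rightarrow> real^3 \<Rightarrow> real \<Rightarrow> real^3 \<Rightarrow> real" where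
  "kappa m hb gam Ups delta l rho T ub x v =
     (\<integral>y\<in>{0..x}. (- m * sigmaxx gam Ups delta l ub y v / (2 * sigmax gam Ups delta l ub y v)
                   - hb * sigmax gam Ups delta l ub y v
                   + nuf gam rho T ub v / v $ 3) \<partial>lborel)"

definition Msig :: "real \<Rightarrow> real \<Rightarrow> (real \<Rightarrow> real) \<Rightarrow> real \<Rightarrow> real \<Rightarrow> real \<Rightarrow> real \<Rightarrow> real^3 \<Rightarrow> real^3 \<Rightarrow> real" where
  "Msig hb gam Ups delta l rho T ub v = Maxw rho T ub v * exp (- 2 * hb * sigmaf gam Ups delta l ub 0 v)"

(* Y_A(f)(x,v); the value at v_3 = 0 (a null set) is set to 0 *)
definition YA :: "real \<Rightarrow> real \<Rightarrow> real \<Rightarrow> (real \<Rightarrow> real) \<Rightarrow> real \<Rightarrow> real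
     \<Rightarrow> real \<Rightarrow> real \<Rightarrow> real^3 \<Rightarrow> real \<Rightarrow> real^3 \<Rightarrow> real \<Rightarrow> real
     \<Rightarrow> (real \<Rightarrow> real^3 \<Rightarrow> real) \<Rightarrow> real \<Rightarrow> real^3 \<Rightarrow> real" where
  "YA m hb gam Ups delta l rho T ub Tw uw alpha A f x v =
    (let kap = kappa m hb gam Ups delta l rho T ub;
         sx = sigmax gam Ups delta l ub;
         Ms = Msig hb gam Ups delta l rho T ub
     in if v $ 3 > 0 then
          (1 - alpha) * exp (kap A (R0 v) - kap x v) * f A (R0 v)
          + alpha * Mwall Tw uw v / sqrt (Ms v) *
            (\<integral>w\<in>{w. w $ 3 < 0}. (- w $ 3) * (sx 0 v powr (m/2) / sx 0 w powr (m/2))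
                 * exp (kap A w - kap x v) * f A w * sqrt (Ms w) \<partial>lborel)
        else if v $ 3 < 0 then exp (kap A v - kap x v) * f A v
        else 0)"

definition Zop :: "real \<Rightarrow> real \<Rightarrow> real \<Rightarrow> (real \<Rightarrow> real) \<Rightarrow> real \<Rightarrow> real
     \<Rightarrow> real \<Rightarrow> real \<Rightarrow> real^3 \<Rightarrow> real \<Rightarrow> real^3 \<Rightarrow> real \<Rightarrow> real
     \<Rightarrow> (real \<Rightarrow> real^3 \<Rightarrow> real) \<Rightarrow> real \<Rightarrow> real^3 \<Rightarrow> real" where
  "Zop m hb gam Ups delta l rho T ub Tw uw alpha A f x v =
    (let kap = kappa m hb gam Ups delta l rho T ub;
         sx = sigmax gam Ups delta l ub;
         Ms = Msig hb gam Ups delta l rho T ub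
     in if v $ 3 > 0 then
          (1 - alpha) * (\<integral>x'\<in>{0..A}. exp (- (kap x v - kap x' (R0 v))) * (1 / v $ 3) * f x' (R0 v) \<partial>lborel)
          - alpha * Mwall Tw uw v / sqrt (Ms v) *
            (\<integral>w\<in>{w. w $ 3 < 0}. (\<integral>x'\<in>{0..A}. (- w $ 3) * (sx 0 v powr (m/2) / sx 0 w powr (m/2))
                 * exp (- (kap x v - kap x' w)) * (1 / w $ 3) * f x' w * sqrt (Ms w) \<partial>lborel) \<partial>lborel)
        else 0)"

(* U(f)(x,v); the value at v_3 = 0 is set to 0 *)
definition Uop :: "real \<Rightarrow> real \<Rightarrow> real \<Rightarrow> (real \<Rightarrow> real) \<Rightarrow> real \<Rightarrow> real
     \<Rightarrow> real \<Rightarrow> real \<Rightarrow> real^3 \<Rightarrow> real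
     \<Rightarrow> (real \<Rightarrow> real^3 \<Rightarrow> real) \<Rightarrow> real \<Rightarrow> real^3 \<Rightarrow> real" where
  "Uop m hb gam Ups delta l rho T ub A f x v =
    (let kap = kappa m hb gam Ups delta l rho T ub
     in if v $ 3 > 0 then
          (\<integral>x'\<in>{0..x}. exp (- (kap x v - kap x' v)) * (1 / v $ 3) * f x' v \<partial>lborel)
        else if v $ 3 < 0 then
          - (\<integral>x'\<in>{x..A}. exp (- (kap x v - kap x' v)) * (1 / v $ 3) * f x' v \<partial>lborel)
        else 0)"

end

theory Submission
  imports Defs
begin

text \<open>Along a characteristic the three operators carry the factor \<open>exp (\<kappa>(x',w) - \<kappa>(x,v))\<close>.
  The derivative \<open>\<sigma>\<^sub>x\<close> is comparable, with constant \<open>7 + 20 B\<close> where \<open>B\<close> bounds \<open>\<Upsilon>'\<close>, to the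
  explicit rate \<open>min ((\<delta>x + l)\<^bsup>p-1\<^esup>) ((1 + |v - u|)\<^bsup>\<gamma>-1\<^esup>)\<close>, \<open>p = 2/(3-\<gamma>)\<close>. If \<open>\<delta>A\<close> is small, \<open>\<delta>x + l\<close>
  stays within a factor two of \<open>l\<close>, so the terms \<open>ln \<sigma>\<^sub>x\<close> and \<open>hb \<sigma>\<close> of \<open>\<kappa>\<close> vary by \<open>O(1)\<close> and
  \<open>\<kappa>(x,v) = x \<nu>(v)/v\<^sub>3 + O(1)\<close>. The transport parts are then bounded by
  \<open>\<integral> (\<nu>/|v\<^sub>3|) exp (-\<nu>|x - x'|/|v\<^sub>3|) dx' \<le> 1\<close>. In the diffuse-reflection parts the ratio
  \<open>(\<sigma>\<^sub>x(0,v)/\<sigma>\<^sub>x(0,w))\<^bsup>m/2\<^esup>\<close> grows at most exponentially in \<open>|v - u| + |w - u|\<close>; this is absorbed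
  by the Gaussians \<open>\<surd>M\<^sub>\<sigma>(w)\<close> and \<open>M\<^sub>w(v)/\<surd>M\<^sub>\<sigma>(v)\<close>, the latter because \<open>T\<^sub>w < 2T\<close> and \<open>hb\<close> is small.\<close>

lemma
  assumes "cutoff U"
  shows cutoff_range: "s \<ge> 0 \<Longrightarrow> 0 \<le> U s \<and> U s \<le> 1"
    and cutoff_antimono: "antimono_on {0..} U"
    and cutoff_eq_1: "0 \<le> s \<Longrightarrow> s \<le> 1 \<Longrightarrow> U s = 1"
    and cutoff_eq_0: "s \<ge> 2 \<Longrightarrow> U s = 0"
  using assms unfolding cutoff_def by auto

lemma cutoff_deriv_iter_has_real_derivative:
  "cutoff U \<Longrightarrow> ((deriv ^^ k) U has_real_derivative (deriv ^^ Suc k) U x) (at x)"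
  by (simp add: cutoff_def DERIV_deriv_iff_real_differentiable)

lemma cutoff_has_real_derivative: "cutoff U \<Longrightarrow> (U has_real_derivative deriv U x) (at x)"
  using cutoff_deriv_iter_has_real_derivative[of U 0] by simp

lemma cutoff_deriv_has_real_derivative:
  "cutoff U \<Longrightarrow> (deriv U has_real_derivative deriv (deriv U) x) (at x)"
  using cutoff_deriv_iter_has_real_derivative[of U 1] by simp

lemma isCont_cutoff_deriv2: "cutoff U \<Longrightarrow> isCont (deriv (deriv U)) x"
  using DERIV_isCont[OF cutoff_deriv_iter_has_real_derivative[of U 2]] by (simp add: numeral_2_eq_2)

lemma DERIV_const_on_interval:
  fixes f :: "real \<Rightarrow> real"
  assumes f: "(f has_real_derivative D) (at x)" and ab: "a < b" "x \<in> {a..b}"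
    and const: "\<And>y. y \<in> {a..b} \<Longrightarrow> f y = c"
  shows "D = 0"
proof (rule vector_derivative_unique_within_closed_interval[OF ab(1)])
  show "x \<in> cbox a b" using ab by simp
  show "(f has_vector_derivative D) (at x within cbox a b)"
    using f by (simp add: has_real_derivative_iff_has_vector_derivative has_vector_derivative_at_within)
  show "(f has_vector_derivative 0) (at x within cbox a b)"
    by (rule has_vector_derivative_transform_within[OF has_vector_derivative_const[of c] zero_less_one])
      (use const ab in auto)
qed

lemma cutoff_deriv_eq_0:
  assumes U: "cutoff U" and s: "0 \<le> s \<and> s \<le> 1 \<or> s \<ge> 2"
  shows "deriv U s = 0"
  using s
proof
  assume "0 \<le> s \<and> s \<le> 1"
  then show ?thesis
    by (intro DERIV_const_on_interval[OF cutoff_has_real_derivative[OF U], of 0 1 _ 1])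
      (auto intro: cutoff_eq_1[OF U])
next
  assume "s \<ge> 2"
  then show ?thesis
    by (intro DERIV_const_on_interval[OF cutoff_has_real_derivative[OF U], of 2 "s + 1" _ 0])
      (auto intro: cutoff_eq_0[OF U])
qed

lemma cutoff_deriv_nonpos:
  assumes U: "cutoff U" and s: "s > 0"
  shows "deriv U s \<le> 0"
proof -
  have "mono_on {0..} (\<lambda>x. - U x)"
    using cutoff_antimono[OF U] unfolding monotone_on_def by auto
  moreover have "((\<lambda>x. - U x) has_real_derivative - deriv U s) (at s)"
    using cutoff_has_real_derivative[OF U] by (intro derivative_eq_intros) auto
  ultimately have "- deriv U s \<ge> 0"
    by (rule mono_on_imp_deriv_nonneg) (use s in simp)
  then show ?thesis by simp
qed

lemma cutoff_deriv_bounded: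
  assumes U: "cutoff U"
  obtains B where "B \<ge> 0" "\<And>s. s \<ge> 0 \<Longrightarrow> \<bar>deriv U s\<bar> \<le> B"
proof -
  have "continuous_on {1..2} (deriv U)"
    using DERIV_isCont[OF cutoff_deriv_has_real_derivative[OF U]]
    by (simp add: continuous_at_imp_continuous_on)
  then obtain B where B: "\<And>s. s \<in> {1..2} \<Longrightarrow> \<bar>deriv U s\<bar> \<le> B"
    using compact_continuous_image[of "{1..2}" "deriv U"] compact_imp_bounded bounded_iff
    by (metis compact_Icc image_eqI real_norm_def)
  have "\<bar>deriv U s\<bar> \<le> max B 0" if "s \<ge> 0" for s
    using B[of s] cutoff_deriv_eq_0[OF U, of s] that by (cases "s \<in> {1..2}") auto
  then show ?thesis using that[of "max B 0"] by auto
qed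

section \<open>The weight profile\<close>

text \<open>\<open>\<sigma>(x,v)\<close> is \<open>sigma_profile \<Upsilon> (2/(3-\<gamma>)) ((1+|v-u|)\<^bsup>3-\<gamma>\<^esup>) ((1+|v-u|)\<^bsup>1-\<gamma>\<^esup>) (3|v-u|\<^sup>2) (\<delta>x+l)\<close>,
  see \<open>sigmaf_eq_Sig\<close> below.\<close>

definition sigma_profile :: "(real \<Rightarrow> real) \<Rightarrow> real \<Rightarrow> real \<Rightarrow> real \<Rightarrow> real \<Rightarrow> real \<Rightarrow> real" where
  "sigma_profile U p a b c z = 5 * z powr p * (1 - U (z / a)) + (z / b + c) * U (z / a)"

definition sigma_profile' :: "(real \<Rightarrow> real) \<Rightarrow> real \<Rightarrow> real \<Rightarrow> real \<Rightarrow> real \<Rightarrow> real \<Rightarrow> real" where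
  "sigma_profile' U p a b c z = 5 * p * z powr (p - 1) * (1 - U (z / a)) - 5 * z powr p * deriv U (z / a) / a
     + U (z / a) / b + (z / b + c) * deriv U (z / a) / a"

definition sigma_profile'' :: "(real \<Rightarrow> real) \<Rightarrow> real \<Rightarrow> real \<Rightarrow> real \<Rightarrow> real \<Rightarrow> real \<Rightarrow> real" where
  "sigma_profile'' U p a b c z = 5 * p * (p - 1) * z powr (p - 2) * (1 - U (z / a))
     - 10 * p * z powr (p - 1) * deriv U (z / a) / a
     - 5 * z powr p * deriv (deriv U) (z / a) / a^2
     + 2 * deriv U (z / a) / (a * b) + (z / b + c) * deriv (deriv U) (z / a) / a^2"

lemma has_real_derivative_sigma_profile:
  assumes U: "cutoff U" and z: "z > 0" and a: "a > 0" and b: "b > 0"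
  shows "(sigma_profile U p a b c has_real_derivative sigma_profile' U p a b c z) (at z)"
proof -
  have "((\<lambda>z. U (z / a)) has_real_derivative deriv U (z / a) * (1 / a)) (at z)"
    using a by (intro DERIV_chain2[OF cutoff_has_real_derivative[OF U]]) (auto intro!: derivative_eq_intros)
  then have "(sigma_profile U p a b c has_real_derivative
     5 * (p * z powr (p - 1)) * (1 - U (z / a)) + 5 * z powr p * (- (deriv U (z / a) * (1 / a)))
     + ((1 / b) * U (z / a) + (z / b + c) * (deriv U (z / a) * (1 / a)))) (at z)"
    unfolding sigma_profile_def using z a b
    by (auto intro!: derivative_eq_intros has_real_derivative_powr simp: field_simps)
  then show ?thesis
    by (rule DERIV_cong) (simp add: sigma_profile'_def field_simps)
qed

lemma has_real_derivative_sigma_profile':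
  assumes U: "cutoff U" and z: "z > 0" and a: "a > 0" and b: "b > 0"
  shows "(sigma_profile' U p a b c has_real_derivative sigma_profile'' U p a b c z) (at z)"
proof -
  have d1: "((\<lambda>z. U (z / a)) has_real_derivative deriv U (z / a) * (1 / a)) (at z)"
    using a by (intro DERIV_chain2[OF cutoff_has_real_derivative[OF U]]) (auto intro!: derivative_eq_intros)
  have d2: "((\<lambda>z. deriv U (z / a)) has_real_derivative deriv (deriv U) (z / a) * (1 / a)) (at z)"
    using a by (intro DERIV_chain2[OF cutoff_deriv_has_real_derivative[OF U]]) (auto intro!: derivative_eq_intros)
  have "(sigma_profile' U p a b c has_real_derivative
     5 * p * ((p - 1) * z powr (p - 1 - 1)) * (1 - U (z / a)) + 5 * p * z powr (p - 1) * (- (deriv U (z / a) * (1 / a)))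
     - (5 * (p * z powr (p - 1)) * deriv U (z / a) / a + 5 * z powr p * (deriv (deriv U) (z / a) * (1 / a)) / a)
     + (deriv U (z / a) * (1 / a)) / b
     + ((1 / b) * deriv U (z / a) / a + (z / b + c) * (deriv (deriv U) (z / a) * (1 / a)) / a)) (at z)"
    unfolding sigma_profile'_def using z a b d1 d2
    by (auto intro!: derivative_eq_intros has_real_derivative_powr simp: field_simps)
  then show ?thesis
    by (rule DERIV_cong) (simp add: sigma_profile''_def field_simps power2_eq_square)
qed

lemma isCont_sigma_profile'':
  assumes U: "cutoff U" and z: "z > 0" and a: "a > 0" and b: "b > 0"
  shows "isCont (sigma_profile'' U p a b c) z"
  unfolding sigma_profile''_def using z a b
  by (auto intro!: continuous_intros isCont_o2[OF _ isCont_cutoff_deriv2[OF U]]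
      isCont_o2[OF _ DERIV_isCont[OF cutoff_has_real_derivative[OF U]]]
      isCont_o2[OF _ DERIV_isCont[OF cutoff_deriv_has_real_derivative[OF U]]])

lemma sigma_profile'_eq:
  "sigma_profile' U p a b c z = 5 * p * z powr (p - 1) * (1 - U (z / a)) + U (z / a) / b
     + deriv U (z / a) / a * (z / b + c - 5 * z powr p)"
  unfolding sigma_profile'_def by (cases "a = 0") (simp_all add: field_simps)

context
  fixes U :: "real \<Rightarrow> real" and p a b c z B :: real
  assumes U: "cutoff U" and p: "1/3 < p" "p \<le> 1" and a: "a \<ge> 1" and b: "b \<ge> 1"
    and ab: "a powr (p - 1) = 1 / b" and c: "0 \<le> c" "c \<le> 3 * a powr p" and z: "z \<ge> 1"
    and B: "B \<ge> 0" "\<And>s. s \<ge> 0 \<Longrightarrow> \<bar>deriv U s\<bar> \<le> B"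
begin

lemma sigma_profile'_bounds_inner:
  assumes za: "z \<le> a"
  shows "min (z powr (p - 1)) (1 / b) \<le> sigma_profile' U p a b c z
    \<and> sigma_profile' U p a b c z \<le> (7 + 20 * B) * min (z powr (p - 1)) (1 / b)"
proof -
  have s: "0 \<le> z / a" "z / a \<le> 1" using z za by auto
  have G: "sigma_profile' U p a b c z = 1 / b"
    unfolding sigma_profile'_eq using cutoff_eq_1[OF U s] cutoff_deriv_eq_0[OF U] s by simp
  have "a powr (p - 1) \<le> z powr (p - 1)" using p z za by (intro powr_mono2') auto
  then have "min (z powr (p - 1)) (1 / b) = 1 / b" using ab by simp
  moreover have "1 / b \<le> (7 + 20 * B) * (1 / b)" using B(1) b by (simp add: field_simps)
  ultimately show ?thesis using G by simp
qed

lemma sigma_profile'_bounds_outer: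
  assumes za: "2 * a \<le> z"
  shows "min (z powr (p - 1)) (1 / b) \<le> sigma_profile' U p a b c z
    \<and> sigma_profile' U p a b c z \<le> (7 + 20 * B) * min (z powr (p - 1)) (1 / b)"
proof -
  have s: "z / a \<ge> 2" using a za by (simp add: field_simps)
  have G: "sigma_profile' U p a b c z = 5 * p * z powr (p - 1)"
    unfolding sigma_profile'_eq using cutoff_eq_0[OF U s] cutoff_deriv_eq_0[OF U] s by simp
  have "z powr (p - 1) \<le> a powr (p - 1)" using p a za by (intro powr_mono2') auto
  then have "min (z powr (p - 1)) (1 / b) = z powr (p - 1)" using ab by simp
  moreover have "z powr (p - 1) \<le> 5 * p * z powr (p - 1)" "5 * p * z powr (p - 1) \<le> 5 * z powr (p - 1)"
    using p z by auto
  ultimately show ?thesis using G B(1) z by (simp add: mult_right_mono)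
qed

lemma sigma_profile_transition_inv_b:
  assumes za: "z \<le> 2 * a"
  shows "1 / b \<le> 2 * z powr (p - 1)"
proof -
  have "2 powr (p - 1) \<ge> 2 powr (-1)" using p by (intro powr_mono) auto
  then have "1 / b \<le> 2 * (2 powr (p - 1) * (1 / b))" using b by (simp add: powr_minus field_simps)
  also have "2 powr (p - 1) * (1 / b) = (2 * a) powr (p - 1)" using a ab by (simp add: powr_mult)
  also have "(2 * a) powr (p - 1) \<le> z powr (p - 1)" using p z za by (intro powr_mono2') auto
  finally show ?thesis by simp
qed

text \<open>This makes the \<open>\<Upsilon>'\<close> term of \<open>sigma_profile'\<close> nonnegative in the transition region.\<close>

lemma sigma_profile_transition_bracket:
  assumes za: "a \<le> z" "z \<le> 2 * a"
  shows "z / b + c \<le> 5 * z powr p"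
proof -
  have "z / b \<le> z * (2 * z powr (p - 1))"
    using sigma_profile_transition_inv_b[OF za(2)] z by (simp add: divide_inverse mult_left_mono)
  also have "\<dots> = 2 * z powr p" using z by (simp add: powr_diff)
  finally have "z / b \<le> 2 * z powr p" .
  moreover have "a powr p \<le> z powr p" using za p a by (intro powr_mono2) auto
  ultimately show ?thesis using c by linarith
qed

lemma sigma_profile'_bounds_transition:
  assumes za: "a \<le> z" "z \<le> 2 * a"
  shows "min (z powr (p - 1)) (1 / b) \<le> sigma_profile' U p a b c z
    \<and> sigma_profile' U p a b c z \<le> (7 + 20 * B) * min (z powr (p - 1)) (1 / b)"
proof -
  define s where "s = z / a"
  have s: "1 \<le> s" "s \<le> 2" using a za by (auto simp: s_def field_simps)
  have U01: "0 \<le> U s" "U s \<le> 1" using cutoff_range[OF U] s by auto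
  have zpos: "z powr (p - 1) > 0" using z by simp
  have "z powr (p - 1) \<le> a powr (p - 1)" using p a za by (intro powr_mono2') auto
  then have zb: "z powr (p - 1) \<le> 1 / b" using ab by simp
  then have rate: "min (z powr (p - 1)) (1 / b) = z powr (p - 1)" by simp
  have bz: "1 / b \<le> 2 * z powr (p - 1)" using sigma_profile_transition_inv_b[OF za(2)] .
  have brk: "z / b + c - 5 * z powr p \<in> {- 5 * z powr p..0}"
    using sigma_profile_transition_bracket[OF za] b z c by simp
  have dU: "- B \<le> deriv U s" "deriv U s \<le> 0"
    using B(2)[of s] cutoff_deriv_nonpos[OF U, of s] s by auto
  have G: "sigma_profile' U p a b c z = 5 * p * z powr (p - 1) * (1 - U s) + U s / b
      + deriv U s / a * (z / b + c - 5 * z powr p)"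
    unfolding sigma_profile'_eq s_def ..
  have "deriv U s / a * (z / b + c - 5 * z powr p) \<ge> 0"
    using dU(2) brk a by (intro mult_nonpos_nonpos divide_nonpos_pos) auto
  moreover have "z powr (p - 1) * (1 - U s) \<le> 5 * p * z powr (p - 1) * (1 - U s)"
    using p zpos U01 by (intro mult_right_mono) auto
  moreover have "z powr (p - 1) * U s \<le> U s / b"
    using mult_right_mono[OF zb U01(1)] by simp
  moreover have "z powr (p - 1) = z powr (p - 1) * (1 - U s) + z powr (p - 1) * U s"
    by (simp add: algebra_simps)
  ultimately have lower: "z powr (p - 1) \<le> sigma_profile' U p a b c z"
    unfolding G by linarith
  have "deriv U s / a * (z / b + c - 5 * z powr p)
      = (- deriv U s / a) * (- (z / b + c - 5 * z powr p))" by (simp add: algebra_simps)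
  also have "\<dots> \<le> B / a * (5 * z powr p)"
    using dU brk a by (intro mult_mono divide_right_mono) auto
  also have "\<dots> = 5 * B * s * z powr (p - 1)"
    using z a by (simp add: s_def powr_diff)
  also have "\<dots> \<le> 10 * B * z powr (p - 1)"
    using zpos mult_left_mono[OF s(2) B(1)] by (intro mult_right_mono) auto
  finally have "deriv U s / a * (z / b + c - 5 * z powr p) \<le> 10 * B * z powr (p - 1)" .
  moreover have "5 * p * z powr (p - 1) * (1 - U s) \<le> 5 * z powr (p - 1)"
  proof -
    have "p * (1 - U s) \<le> 1" using p U01 by (simp add: mult_le_one)
    then have "(5 * (p * (1 - U s))) * z powr (p - 1) \<le> 5 * z powr (p - 1)" using zpos by simp
    then show ?thesis by (simp add: algebra_simps)
  qed
  moreover have "U s / b \<le> 2 * z powr (p - 1)"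
    using bz U01 b divide_right_mono[of "U s" 1 b] by linarith
  ultimately have "sigma_profile' U p a b c z \<le> (7 + 10 * B) * z powr (p - 1)"
    unfolding G by (simp add: algebra_simps)
  also have "\<dots> \<le> (7 + 20 * B) * z powr (p - 1)" using B(1) zpos by (intro mult_right_mono) auto
  finally show ?thesis using lower rate by simp
qed

lemma sigma_profile'_bounds:
  "min (z powr (p - 1)) (1 / b) \<le> sigma_profile' U p a b c z
    \<and> sigma_profile' U p a b c z \<le> (7 + 20 * B) * min (z powr (p - 1)) (1 / b)"
  using sigma_profile'_bounds_inner sigma_profile'_bounds_outer sigma_profile'_bounds_transition
  by (meson linorder_le_cases)

end

definition sigma_exp :: "real \<Rightarrow> real" where
  "sigma_exp gam = 2 / (3 - gam)"

definition sigma_rate :: "real \<Rightarrow> real \<Rightarrow> real \<Rightarrow> real" where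
  "sigma_rate gam z X = min (z powr (sigma_exp gam - 1)) ((1 + X) powr (gam - 1))"

abbreviation Sig :: "real \<Rightarrow> (real \<Rightarrow> real) \<Rightarrow> real \<Rightarrow> real \<Rightarrow> real" where
  "Sig gam U z X \<equiv>
     sigma_profile U (sigma_exp gam) ((1 + X) powr (3 - gam)) ((1 + X) powr (1 - gam)) (3 * X^2) z"

abbreviation Sig' :: "real \<Rightarrow> (real \<Rightarrow> real) \<Rightarrow> real \<Rightarrow> real \<Rightarrow> real" where
  "Sig' gam U z X \<equiv>
     sigma_profile' U (sigma_exp gam) ((1 + X) powr (3 - gam)) ((1 + X) powr (1 - gam)) (3 * X^2) z"

abbreviation Sig'' :: "real \<Rightarrow> (real \<Rightarrow> real) \<Rightarrow> real \<Rightarrow> real \<Rightarrow> real" where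
  "Sig'' gam U z X \<equiv>
     sigma_profile'' U (sigma_exp gam) ((1 + X) powr (3 - gam)) ((1 + X) powr (1 - gam)) (3 * X^2) z"

lemma sigma_exp_bounds: "-3 < gam \<Longrightarrow> gam \<le> 1 \<Longrightarrow> 1/3 < sigma_exp gam \<and> sigma_exp gam \<le> 1"
  unfolding sigma_exp_def by (auto simp: field_simps)

lemma powr_powr_sigma_exp:
  assumes "-3 < gam" "gam \<le> 1" "r > 0"
  shows "(r powr (3 - gam)) powr (sigma_exp gam - 1) = r powr (gam - 1)"
    and "(r powr (3 - gam)) powr (sigma_exp gam) = r^2"
proof -
  have "(3 - gam) * (sigma_exp gam - 1) = gam - 1" "(3 - gam) * sigma_exp gam = 2"
    using assms unfolding sigma_exp_def by (simp_all add: field_simps)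
  then show "(r powr (3 - gam)) powr (sigma_exp gam - 1) = r powr (gam - 1)"
    and "(r powr (3 - gam)) powr (sigma_exp gam) = r^2"
    using assms by (simp_all add: powr_powr powr_realpow)
qed

lemma Sig'_bounds:
  assumes U: "cutoff U" and g: "-3 < gam" "gam \<le> 1" and X: "X \<ge> 0" and z: "z \<ge> 1"
    and B: "B \<ge> 0" "\<And>s. s \<ge> 0 \<Longrightarrow> \<bar>deriv U s\<bar> \<le> B"
  shows "sigma_rate gam z X \<le> Sig' gam U z X \<and> Sig' gam U z X \<le> (7 + 20 * B) * sigma_rate gam z X"
proof -
  have r: "1 + X > 0" using X by simp
  have "(1 + X) powr (gam - 1) = 1 / (1 + X) powr (1 - gam)"
    using r by (simp add: powr_minus_divide[symmetric])
  moreover have "3 * X^2 \<le> 3 * (1 + X)^2" using X by (simp add: power_mono)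
  ultimately show ?thesis
    unfolding sigma_rate_def
    using sigma_profile'_bounds[OF U _ _ _ _ _ _ _ z B] sigma_exp_bounds[OF g]
      powr_powr_sigma_exp[OF g r] X g by (simp add: ge_one_powr_ge_zero)
qed

lemma Sig'_pos:
  assumes U: "cutoff U" and g: "-3 < gam" "gam \<le> 1" and X: "X \<ge> 0" and z: "z \<ge> 1"
  shows "Sig' gam U z X > 0"
proof -
  obtain B where "B \<ge> 0" "\<And>s. s \<ge> 0 \<Longrightarrow> \<bar>deriv U s\<bar> \<le> B"
    using cutoff_deriv_bounded[OF U] by blast
  moreover have "sigma_rate gam z X > 0" unfolding sigma_rate_def using z X by simp
  ultimately show ?thesis using Sig'_bounds[OF U g X z] by fastforce
qed

lemma sigmaf_eq_Sig: "sigmaf gam U delta l ub x v = Sig gam U (delta * x + l) (norm (v - ub))"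
  unfolding sigmaf_def sigma_profile_def sigma_exp_def by simp

lemma has_real_derivative_Sig_affine:
  assumes U: "cutoff U" and X: "X \<ge> 0" and pos: "delta * y + l > 0"
  shows "((\<lambda>y. Sig gam U (delta * y + l) X) has_real_derivative Sig' gam U (delta * y + l) X * delta) (at y)"
proof (rule DERIV_chain2[of "sigma_profile U _ _ _ _"])
  show "((\<lambda>y. delta * y + l) has_real_derivative delta) (at y)"
    by (auto intro!: derivative_eq_intros)
qed (use X has_real_derivative_sigma_profile[OF U pos] in auto)

lemma has_real_derivative_Sig'_affine:
  assumes U: "cutoff U" and X: "X \<ge> 0" and pos: "delta * y + l > 0"
  shows "((\<lambda>y. Sig' gam U (delta * y + l) X) has_real_derivative Sig'' gam U (delta * y + l) X * delta) (at y)"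
proof (rule DERIV_chain2[of "sigma_profile' U _ _ _ _"])
  show "((\<lambda>y. delta * y + l) has_real_derivative delta) (at y)"
    by (auto intro!: derivative_eq_intros)
qed (use X has_real_derivative_sigma_profile'[OF U pos] in auto)

lemma sigmax_eq:
  assumes U: "cutoff U" and pos: "delta * x + l > 0"
  shows "sigmax gam U delta l ub x v = delta * Sig' gam U (delta * x + l) (norm (v - ub))"
  unfolding sigmax_def sigmaf_eq_Sig
  using DERIV_imp_deriv[OF has_real_derivative_Sig_affine[OF U _ pos]] by simp

lemma sigmaxx_eq:
  assumes U: "cutoff U" and pos: "delta * x + l > 0"
  shows "sigmaxx gam U delta l ub x v = delta^2 * Sig'' gam U (delta * x + l) (norm (v - ub))"
proof -
  have "((\<lambda>y. sigmax gam U delta l ub y v) has_real_derivative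
          delta * (Sig'' gam U (delta * x + l) (norm (v - ub)) * delta)) (at x)"
  proof (rule has_field_derivative_transform_within_open[where S = "{y. delta * y + l > 0}"])
    show "((\<lambda>y. delta * Sig' gam U (delta * y + l) (norm (v - ub))) has_real_derivative
          delta * (Sig'' gam U (delta * x + l) (norm (v - ub)) * delta)) (at x)"
      by (intro DERIV_cmult has_real_derivative_Sig'_affine[OF U _ pos]) simp
    show "open {y. delta * y + l > 0}" by (auto intro!: open_Collect_less continuous_intros)
  qed (use pos sigmax_eq[OF U] in auto)
  then show ?thesis
    unfolding sigmaxx_def using DERIV_imp_deriv by (simp add: power2_eq_square algebra_simps)
qed

lemma has_real_derivative_kappa_primitive:
  assumes U: "cutoff U" and g: "-3 < gam" "gam \<le> 1" and X: "X \<ge> 0" and pos: "delta * y + l \<ge> 1"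
  shows "((\<lambda>y. - (m / 2) * ln (Sig' gam U (delta * y + l) X) - hb * Sig gam U (delta * y + l) X + y * c)
    has_real_derivative
      - m * (delta * Sig'' gam U (delta * y + l) X) / (2 * Sig' gam U (delta * y + l) X)
      - hb * (delta * Sig' gam U (delta * y + l) X) + c) (at y)"
proof -
  have p: "delta * y + l > 0" using pos by simp
  have "((\<lambda>y. ln (Sig' gam U (delta * y + l) X)) has_real_derivative
      (Sig'' gam U (delta * y + l) X * delta) / Sig' gam U (delta * y + l) X) (at y)"
    using DERIV_chain2[OF DERIV_ln_divide[OF Sig'_pos[OF U g X pos]] has_real_derivative_Sig'_affine[OF U X p]]
    by (simp add: field_simps)
  then have "((\<lambda>y. - (m / 2) * ln (Sig' gam U (delta * y + l) X) - hb * Sig gam U (delta * y + l) X + y * c)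
    has_real_derivative - (m / 2) * ((Sig'' gam U (delta * y + l) X * delta) / Sig' gam U (delta * y + l) X)
      - hb * (Sig' gam U (delta * y + l) X * delta) + 1 * c) (at y)"
    by (intro DERIV_add DERIV_diff DERIV_cmult DERIV_cmult_right DERIV_ident
        has_real_derivative_Sig_affine[OF U X p])
  then show ?thesis by (rule DERIV_cong) (simp add: field_simps)
qed

lemma isCont_kappa_integrand:
  assumes U: "cutoff U" and g: "-3 < gam" "gam \<le> 1" and X: "X \<ge> 0" and pos: "delta * y + l \<ge> 1"
  shows "isCont (\<lambda>y. - m * (delta * Sig'' gam U (delta * y + l) X) / (2 * Sig' gam U (delta * y + l) X)
      - hb * (delta * Sig' gam U (delta * y + l) X) + c) y"
proof -
  have p: "delta * y + l > 0" using pos by simp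
  have "(1 + X) powr (3 - gam) > 0" "(1 + X) powr (1 - gam) > 0" using X by auto
  then have "isCont (\<lambda>y. Sig'' gam U (delta * y + l) X) y"
    by (intro isCont_o2[where f = "\<lambda>y. delta * y + l", OF _ isCont_sigma_profile''[OF U p]])
      (auto intro!: continuous_intros)
  moreover have "isCont (\<lambda>y. Sig' gam U (delta * y + l) X) y"
    using DERIV_isCont[OF has_real_derivative_Sig'_affine[OF U X p]] by simp
  ultimately show ?thesis
    using Sig'_pos[OF U g X pos] by (auto intro!: continuous_intros)
qed

lemma kappa_eq:
  assumes U: "cutoff U" and g: "-3 < gam" "gam \<le> 1" and d: "delta > 0" and l: "l \<ge> 1" and x: "x \<ge> 0"
  shows "kappa m hb gam U delta l rho T ub x v =
    - (m / 2) * (ln (Sig' gam U (delta * x + l) (norm (v - ub))) - ln (Sig' gam U l (norm (v - ub))))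
    - hb * (Sig gam U (delta * x + l) (norm (v - ub)) - Sig gam U l (norm (v - ub)))
    + x * (nuf gam rho T ub v / v $ 3)"
proof -
  define X where "X = norm (v - ub)"
  define c where "c = nuf gam rho T ub v / v $ 3"
  define F where "F y = - (m / 2) * ln (Sig' gam U (delta * y + l) X) - hb * Sig gam U (delta * y + l) X + y * c"
    for y
  define F' where "F' y = - m * (delta * Sig'' gam U (delta * y + l) X) / (2 * Sig' gam U (delta * y + l) X)
      - hb * (delta * Sig' gam U (delta * y + l) X) + c" for y
  have X: "X \<ge> 0" unfolding X_def by simp
  have pos: "delta * y + l \<ge> 1" if "y \<ge> 0" for y using d l that by (simp add: add_increasing)
  have "kappa m hb gam U delta l rho T ub x v = (LINT y:{0..x}|lborel. F' y)"
    unfolding kappa_def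
    by (rule set_lebesgue_integral_cong)
      (use pos[THEN order.strict_trans2[OF zero_less_one]] d
        in \<open>auto simp: sigmax_eq[OF U] sigmaxx_eq[OF U] F'_def X_def c_def power2_eq_square\<close>)
  also have "\<dots> = F x - F 0"
    unfolding set_lebesgue_integral_def
  proof (rule integral_FTC_atLeastAtMost[OF x])
    show "(F has_vector_derivative F' y) (at y within {0..x})" if "0 \<le> y" "y \<le> x" for y
      using has_real_derivative_kappa_primitive[OF U g X pos[OF that(1)]]
      unfolding F_def[abs_def] F'_def
      by (simp add: has_real_derivative_iff_has_vector_derivative has_vector_derivative_at_within)
    show "continuous_on {0..x} F'"
      using isCont_kappa_integrand[OF U g X pos] unfolding F'_def[abs_def]
      by (intro continuous_at_imp_continuous_on) auto
  qed
  finally show ?thesis unfolding F_def X_def c_def by (simp add: algebra_simps)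
qed

section \<open>Integrability in three dimensions\<close>

lemma ex_dyadic_interval:
  fixes X :: real
  assumes "X \<ge> 1"
  shows "\<exists>k. 2^k \<le> X \<and> X < 2^(k+1)"
proof -
  have "1 \<le> nat \<lfloor>X\<rfloor>" using assms by linarith
  then obtain k where k: "2^k \<le> nat \<lfloor>X\<rfloor>" "nat \<lfloor>X\<rfloor> < (2::nat)^(k+1)"
    using ex_power_ivl1[of 2 "nat \<lfloor>X\<rfloor>"] by auto
  have "real (2^k) \<le> real (nat \<lfloor>X\<rfloor>)" "real (nat \<lfloor>X\<rfloor>) + 1 \<le> real (2^(k+1))"
    using k by (simp_all only: of_nat_le_iff flip: of_nat_Suc)
  moreover have "real (nat \<lfloor>X\<rfloor>) \<le> X" "X < real (nat \<lfloor>X\<rfloor>) + 1" using assms by linarith+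
  ultimately have "real (2^k) \<le> X" "X < real (2^(k+1))" by linarith+
  then show ?thesis by (intro exI[of _ k]) simp
qed

lemma emeasure_lborel_cube:
  fixes c :: "real^3"
  assumes R: "R \<ge> 0"
  shows "emeasure lborel (cbox (c - (\<chi> i. R)) (c + (\<chi> i. R))) = ennreal ((2 * R)^3)"
proof -
  have "c \<in> cbox (c - (\<chi> i. R)) (c + (\<chi> i. R))" using R by (simp add: mem_box_cart)
  then have "measure lborel (cbox (c - (\<chi> i. R)) (c + (\<chi> i. R))) = (2 * R)^3"
    using content_cbox_cart[of "c - (\<chi> i. R)" "c + (\<chi> i. R)"] by auto
  then show ?thesis by (simp add: emeasure_eq_measure2 emeasure_lborel_cbox_finite)
qed

lemma mem_cube_if_norm_le:
  fixes c w :: "real^3"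
  assumes "norm (w - c) \<le> R"
  shows "w \<in> cbox (c - (\<chi> i. R)) (c + (\<chi> i. R))"
proof -
  have "\<bar>w $ i - c $ i\<bar> \<le> R" for i
    using component_le_norm_cart[of "w - c" i] assms by simp
  then show ?thesis by (simp add: mem_box_cart abs_le_iff) (smt (verit))
qed

lemma integrable_if_bounded_on_cubes:
  fixes f :: "real^3 \<Rightarrow> real" and c :: "real^3"
  assumes meas: "f \<in> borel_measurable lborel" and nn: "\<And>w. f w \<ge> 0"
    and cover: "\<And>w. f w \<noteq> 0 \<Longrightarrow> \<exists>k. f w \<le> a k \<and> norm (w - c) \<le> R k"
    and a: "\<And>k. a k \<ge> 0" and R: "\<And>k. R k \<ge> 0"
    and summable: "summable (\<lambda>k. a k * (2 * R k)^3)"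
  shows "integrable lborel f"
proof -
  define Q where "Q k = cbox (c - (\<chi> i. R k)) (c + (\<chi> i. R k))" for k
  have pointwise: "ennreal (norm (f w)) \<le> (\<Sum>k. ennreal (a k) * indicator (Q k) w)" for w
  proof (cases "f w = 0")
    case False
    then obtain k where k: "f w \<le> a k" "norm (w - c) \<le> R k" using cover by blast
    have "ennreal (norm (f w)) \<le> ennreal (a k) * indicator (Q k) w"
      using k nn[of w] mem_cube_if_norm_le[OF k(2)] by (simp add: Q_def)
    also have "\<dots> \<le> (\<Sum>j. ennreal (a j) * indicator (Q j) w)"
      by (rule sum_le_suminf[of _ "{k}", simplified]) auto
    finally show ?thesis .
  qed simp
  have "(\<integral>\<^sup>+w. ennreal (norm (f w)) \<partial>lborel) \<le> (\<integral>\<^sup>+w. (\<Sum>k. ennreal (a k) * indicator (Q k) w) \<partial>lborel)"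
    by (intro nn_integral_mono pointwise)
  also have "\<dots> = (\<Sum>k. \<integral>\<^sup>+w. ennreal (a k) * indicator (Q k) w \<partial>lborel)"
    by (rule nn_integral_suminf) (auto simp: Q_def)
  also have "\<dots> = (\<Sum>k. ennreal (a k * (2 * R k)^3))"
    by (subst nn_integral_cmult_indicator) (auto simp: Q_def emeasure_lborel_cube[OF R] ennreal_mult a R)
  also have "\<dots> = ennreal (\<Sum>k. a k * (2 * R k)^3)"
    by (rule suminf_ennreal_eq) (use summable summable_sums a R in auto)
  also have "\<dots> < \<infinity>" by simp
  finally show ?thesis using meas by (simp add: integrable_iff_bounded)
qed

lemma integrable_one_plus_norm_powr_minus_4:
  fixes c :: "real^3"
  shows "integrable lborel (\<lambda>w. (1 + norm (w - c)) powr (-4))"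
proof (rule integrable_if_bounded_on_cubes[where c = c and a = "\<lambda>k. 1 / (2^k)^4" and R = "\<lambda>k. 2^(k+1)"])
  have "(\<lambda>k. 1 / (2^k)^4 * (2 * 2^(k+1))^3) = (\<lambda>k. 64 * (1/2::real)^k)"
    by (simp add: field_simps eval_nat_numeral)
  then show "summable (\<lambda>k. 1 / (2^k)^4 * (2 * 2^(k+1))^3 :: real)"
    by (simp add: summable_mult)
  fix w :: "real^3"
  obtain k where k: "2^k \<le> 1 + norm (w - c)" "1 + norm (w - c) < 2^(k+1)"
    using ex_dyadic_interval[of "1 + norm (w - c)"] by auto
  have "(1 + norm (w - c)) powr (-4) = 1 / (1 + norm (w - c))^4"
    by (simp add: powr_minus_divide powr_realpow)
  also have "\<dots> \<le> 1 / (2^k)^4"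
    using k(1) by (intro divide_left_mono power_mono) (auto intro!: mult_pos_pos add_pos_nonneg simp: add_nonneg_eq_0_iff)
  finally show "\<exists>k. (1 + norm (w - c)) powr (-4) \<le> 1 / (2^k)^4 \<and> norm (w - c) \<le> 2^(k+1)"
    using k(2) by (intro exI[of _ k]) simp
qed (auto simp: powr_real_measurable)

lemma integrable_norm_powr_on_unit_ball:
  fixes c :: "real^3"
  assumes g: "-3 < gam" "gam < 0"
  shows "integrable lborel (\<lambda>w. indicator (cball c 1) w * norm (w - c) powr gam)"
proof -
  define \<rho> where "\<rho> = 2 powr (- gam)"
  have \<rho>: "0 < \<rho>" "\<rho> < 8"
    using g powr_less_mono[of "- gam" 3 2] by (auto simp: \<rho>_def)
  show ?thesis
  proof (rule integrable_if_bounded_on_cubes[where c = c and a = "\<lambda>k. \<rho>^(k+1)" and R = "\<lambda>k. 1 / 2^k"])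
    have "(\<lambda>k. \<rho>^(k+1) * (2 * (1 / 2^k))^3) = (\<lambda>k. (8 * \<rho>) * (\<rho> / 8)^k)"
    proof
      fix k :: nat
      have "((2::real)^k)^3 = (2^3)^k" by (simp only: power_mult[symmetric] mult.commute)
      then show "\<rho>^(k+1) * (2 * (1 / 2^k))^3 = (8 * \<rho>) * (\<rho> / 8)^k"
        by (simp add: power_divide field_simps)
    qed
    moreover have "summable (\<lambda>k. (\<rho> / 8)^k)" using \<rho> by (intro summable_geometric) simp
    ultimately show "summable (\<lambda>k. \<rho>^(k+1) * (2 * (1 / 2^k))^3)" by (simp add: summable_mult)
    fix w :: "real^3"
    assume nz: "indicator (cball c 1) w * norm (w - c) powr gam \<noteq> 0"
    then have "w \<in> cball c 1" "w \<noteq> c" by (auto simp: indicator_def split: if_splits)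
    then have w: "0 < norm (w - c)" "norm (w - c) \<le> 1" by (auto simp: dist_norm norm_minus_commute)
    obtain k where k: "2^k \<le> 1 / norm (w - c)" "1 / norm (w - c) < 2^(k+1)"
      using ex_dyadic_interval[of "1 / norm (w - c)"] w by auto
    have "norm (w - c) powr gam \<le> (1 / 2^(k+1)) powr gam"
      using k(2) w g by (intro powr_mono2') (auto simp: field_simps)
    also have "\<dots> = (2 powr real (k+1)) powr (- gam)"
      by (subst powr_realpow) (auto simp: powr_divide powr_minus_divide)
    also have "\<dots> = \<rho>^(k+1)"
      by (simp add: \<rho>_def powr_powr powr_power mult.commute flip: powr_add) (simp add: algebra_simps)
    finally show "\<exists>k. indicator (cball c 1) w * norm (w - c) powr gam \<le> \<rho>^(k+1) \<and> norm (w - c) \<le> 1 / 2^k"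
      using k(1) w by (intro exI[of _ k]) (auto simp: field_simps dist_norm norm_minus_commute)
  next
    have "(\<lambda>w. norm (w - c)) \<in> borel_measurable borel"
      by (intro borel_measurable_continuous_onI continuous_intros)
    then show "(\<lambda>w. indicator (cball c 1) w * norm (w - c) powr gam) \<in> borel_measurable lborel"
      by (simp add: borel_measurable_times borel_measurable_indicator powr_real_measurable)
  qed (use \<rho> in auto)
qed

lemma linear_minus_quadratic_le:
  fixes a b X :: real
  assumes "a > 0"
  shows "b * X - a * X^2 \<le> b^2 / (4 * a)"
proof -
  have "0 \<le> (2 * a * X - b)^2 / (4 * a)" using assms by simp
  also have "\<dots> = a * X^2 - b * X + b^2 / (4 * a)"
    using assms by (simp add: field_simps power2_eq_square)
  finally show ?thesis by simp
qed

lemma one_plus_powr_le_exp: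
  fixes X e :: real
  assumes "X \<ge> 0" "e \<ge> 0"
  shows "(1 + X) powr e \<le> exp (e * X)"
proof -
  have "(1 + X) powr e = exp (e * ln (1 + X))" using assms by (simp add: powr_def add_nonneg_eq_0_iff)
  also have "\<dots> \<le> exp (e * X)" using assms ln_add_one_self_le_self by (simp add: mult_left_mono)
  finally show ?thesis .
qed

lemma exp_linear_minus_quadratic_le:
  fixes a b X :: real
  assumes a: "a > 0" and X: "X \<ge> 0"
  shows "exp (b * X - a * X^2) \<le> exp ((\<bar>b\<bar> + 4)^2 / (4 * a)) * (1 + X) powr (-4)"
proof -
  have "(1 + X) powr 4 * exp (b * X - a * X^2) \<le> exp (4 * X) * exp (b * X - a * X^2)"
    using one_plus_powr_le_exp[OF X, of 4] by (intro mult_right_mono) auto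
  also have "\<dots> = exp ((4 + b) * X - a * X^2)" by (simp add: algebra_simps flip: exp_add)
  also have "\<dots> \<le> exp ((\<bar>b\<bar> + 4) * X - a * X^2)" using X by (simp add: mult_right_mono)
  also have "\<dots> \<le> exp ((\<bar>b\<bar> + 4)^2 / (4 * a))" using linear_minus_quadratic_le[OF a] by simp
  finally show ?thesis
    using X by (simp add: powr_minus field_simps add_nonneg_eq_0_iff)
qed

lemma integrable_exp_linear_minus_quadratic_norm:
  fixes c :: "real^3" and a b :: real
  assumes a: "a > 0"
  shows "integrable lborel (\<lambda>w. exp (b * norm (w - c) - a * (norm (w - c))^2))"
proof (rule Bochner_Integration.integrable_bound)
  show "integrable lborel (\<lambda>w. exp ((\<bar>b\<bar> + 4)^2 / (4 * a)) * (1 + norm (w - c)) powr (-4))"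
    using integrable_one_plus_norm_powr_minus_4[of c] by simp
  show "AE w in lborel. norm (exp (b * norm (w - c) - a * (norm (w - c))^2))
      \<le> norm (exp ((\<bar>b\<bar> + 4)^2 / (4 * a)) * (1 + norm (w - c)) powr (-4))"
    using exp_linear_minus_quadratic_le[OF a, of "norm (w - c)" b for w] by (intro AE_I2) simp
qed (simp add: borel_measurable_continuous_onI continuous_intros)

lemma Maxw_eq: "Maxw rho T ub w = Maxw rho T ub ub * exp (- ((norm (w - ub))^2) / (2 * T))"
  unfolding Maxw_def by simp

lemma Maxw_pos: "rho > 0 \<Longrightarrow> T > 0 \<Longrightarrow> Maxw rho T ub w > 0"
  unfolding Maxw_def by simp

lemma Maxw_le:
  assumes "rho > 0" "T > 0"
  shows "Maxw rho T ub w \<le> Maxw rho T ub ub"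
proof -
  have "exp (- ((norm (w - ub))^2) / (2 * T)) \<le> 1" using assms by simp
  then have "Maxw rho T ub ub * exp (- ((norm (w - ub))^2) / (2 * T)) \<le> Maxw rho T ub ub * 1"
    using Maxw_pos[OF assms, of ub ub] by (intro mult_left_mono) auto
  then show ?thesis by (simp add: Maxw_eq[of _ _ _ w])
qed

lemma nuf_integrand_le_singular:
  fixes v w ub :: "real^3"
  assumes g: "gam < 0" and rho: "rho > 0" and T: "T > 0"
  shows "norm (w - v) powr gam * Maxw rho T ub w
    \<le> Maxw rho T ub ub * (indicator (cball v 1) w * norm (w - v) powr gam)
      + Maxw rho T ub ub * exp (0 * norm (w - ub) - (1 / (2 * T)) * (norm (w - ub))^2)"
proof -
  have pw: "norm (w - v) powr gam \<le> indicator (cball v 1) w * norm (w - v) powr gam + 1"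
  proof (cases "w \<in> cball v 1")
    case False
    then have "norm (w - v) \<ge> 1" by (simp add: dist_norm norm_minus_commute)
    then have "norm (w - v) powr gam \<le> 1 powr gam" using g by (intro powr_mono2') auto
    then show ?thesis using False by simp
  qed simp
  have "norm (w - v) powr gam * Maxw rho T ub w
      \<le> indicator (cball v 1) w * norm (w - v) powr gam * Maxw rho T ub w + Maxw rho T ub w"
    using mult_right_mono[OF pw less_imp_le[OF Maxw_pos[OF rho T, of ub w]]] by (simp add: algebra_simps)
  also have "\<dots> \<le> indicator (cball v 1) w * norm (w - v) powr gam * Maxw rho T ub ub + Maxw rho T ub w"
    using Maxw_le[OF rho T] by (intro add_right_mono mult_left_mono) auto
  finally show ?thesis by (subst (asm) Maxw_eq[of _ _ _ w]) (simp add: algebra_simps)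
qed

lemma nuf_integrand_le_regular:
  fixes v w ub :: "real^3"
  assumes g: "0 \<le> gam" "gam \<le> 1" and rho: "rho > 0" and T: "T > 0"
  shows "norm (w - v) powr gam * Maxw rho T ub w
    \<le> Maxw rho T ub ub * (1 + norm (v - ub)) * exp (1 * norm (w - ub) - (1 / (2 * T)) * (norm (w - ub))^2)"
proof -
  define X d where "X = norm (w - ub)" and "d = norm (v - ub)"
  have X: "X \<ge> 0" "d \<ge> 0" unfolding X_def d_def by auto
  have "norm (w - v) \<le> X + d" unfolding X_def d_def
    using norm_triangle_ineq[of "w - ub" "ub - v"] by (simp add: norm_minus_commute)
  have "norm (w - v) powr gam \<le> 1 + norm (w - v)"
  proof (cases "norm (w - v) \<le> 1")
    case True
    then show ?thesis using g powr_le1[of gam "norm (w - v)"] norm_ge_zero[of "w - v"] by linarith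
  next
    case False
    then show ?thesis using g powr_mono[of gam 1 "norm (w - v)"] by simp
  qed
  also have "\<dots> \<le> (1 + d) * (1 + X)"
    using \<open>norm (w - v) \<le> X + d\<close> mult_nonneg_nonneg[OF X] by (simp add: algebra_simps)
  also have "\<dots> \<le> (1 + d) * exp X" using X exp_ge_add_one_self[of X] by (intro mult_left_mono) auto
  finally have "norm (w - v) powr gam * Maxw rho T ub w \<le> (1 + d) * exp X * Maxw rho T ub w"
    using Maxw_pos[OF rho T] by (simp add: mult_right_mono)
  also have "\<dots> = Maxw rho T ub ub * (1 + d) * exp (1 * X - (1 / (2 * T)) * X^2)"
    by (subst Maxw_eq) (simp add: X_def algebra_simps flip: exp_add)
  finally show ?thesis unfolding X_def d_def .
qed

lemma nuf_integrable:
  fixes v ub :: "real^3"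
  assumes g: "-3 < gam" "gam \<le> 1" and rho: "rho > 0" and T: "T > 0"
  shows "integrable lborel (\<lambda>w. norm (w - v) powr gam * Maxw rho T ub w)"
proof -
  define bound where "bound w = (if gam < 0
      then Maxw rho T ub ub * (indicator (cball v 1) w * norm (w - v) powr gam)
        + Maxw rho T ub ub * exp (0 * norm (w - ub) - (1 / (2 * T)) * (norm (w - ub))^2)
      else Maxw rho T ub ub * (1 + norm (v - ub)) * exp (1 * norm (w - ub) - (1 / (2 * T)) * (norm (w - ub))^2))"
    for w
  have aT: "1 / (2 * T) > 0" using T by simp
  show ?thesis
  proof (rule Bochner_Integration.integrable_bound)
    show "integrable lborel bound"
      unfolding bound_def
      using integrable_norm_powr_on_unit_ball[OF g(1), of v]
        integrable_exp_linear_minus_quadratic_norm[OF aT, where c = ub and b = 0]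
        integrable_exp_linear_minus_quadratic_norm[OF aT, where c = ub and b = 1]
      by (cases "gam < 0") (auto intro!: integrable_add integrable_mult_right)
    have "(\<lambda>w. norm (w - v)) \<in> borel_measurable borel" "(\<lambda>w. Maxw rho T ub w) \<in> borel_measurable borel"
      unfolding Maxw_def by (intro borel_measurable_continuous_onI continuous_intros; use T in simp)+
    then show "(\<lambda>w. norm (w - v) powr gam * Maxw rho T ub w) \<in> borel_measurable lborel"
      by (simp add: borel_measurable_times powr_real_measurable)
    show "AE w in lborel. norm (norm (w - v) powr gam * Maxw rho T ub w) \<le> norm (bound w)"
    proof (intro AE_I2)
      fix w
      have "0 \<le> norm (w - v) powr gam * Maxw rho T ub w" using Maxw_pos[OF rho T, of ub w] by simp
      moreover have "norm (w - v) powr gam * Maxw rho T ub w \<le> bound w"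
        unfolding bound_def
        using nuf_integrand_le_singular[OF _ rho T] nuf_integrand_le_regular[OF _ g(2) rho T] by auto
      ultimately show "norm (norm (w - v) powr gam * Maxw rho T ub w) \<le> norm (bound w)" by simp
    qed
  qed
qed

lemma nuf_pos:
  fixes v ub :: "real^3"
  assumes g: "-3 < gam" "gam \<le> 1" and rho: "rho > 0" and T: "T > 0"
  shows "nuf gam rho T ub v > 0"
proof -
  have nonneg: "AE w in lborel. 0 \<le> norm (w - v) powr gam * Maxw rho T ub w"
    using Maxw_pos[OF rho T] by (intro AE_I2) (simp add: less_imp_le)
  have "\<not> (AE w in lborel. norm (w - v) powr gam * Maxw rho T ub w = 0)"
  proof
    assume "AE w in lborel. norm (w - v) powr gam * Maxw rho T ub w = 0"
    moreover have "AE w in lborel. w \<noteq> v" by (rule AE_lborel_singleton)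
    ultimately have "AE w in (lborel :: (real^3) measure). False"
    proof eventually_elim
      case (elim w)
      then show False using Maxw_pos[OF rho T, of ub w] by simp
    qed
    then show False by (simp add: ae_filter_eq_bot_iff trivial_limit_def[symmetric])
  qed
  then show ?thesis
    using integral_nonneg_AE[OF nonneg] integral_nonneg_eq_0_iff_AE[OF nuf_integrable[OF g rho T] nonneg]
    unfolding nuf_def by linarith
qed

lemma abs_mult_le:
  fixes a b c d :: real
  assumes "\<bar>a\<bar> \<le> c" "\<bar>b\<bar> \<le> d"
  shows "\<bar>a * b\<bar> \<le> c * d"
  using assms by (simp add: abs_mult mult_mono')

lemma powr_le_1_if_nonpos: "z \<ge> 1 \<Longrightarrow> e \<le> 0 \<Longrightarrow> z powr e \<le> (1::real)"
  using powr_mono[of e 0 z] by simp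

lemma real_sqrt_exp: "sqrt (exp y) = exp (y / 2)"
  by (metis exp_ge_zero power2_eq_square real_sqrt_unique exp_add[symmetric] field_sum_of_halves)

text \<open>No integrability of \<open>f\<close> is required, since a non-integrable \<open>f\<close> has Bochner integral \<open>0\<close>.\<close>

lemma integral_abs_bound_dominated:
  fixes f g :: "'a \<Rightarrow> real"
  assumes g: "integrable M g" and fg: "AE x in M. \<bar>f x\<bar> \<le> g x"
  shows "\<bar>integral\<^sup>L M f\<bar> \<le> integral\<^sup>L M g"
proof (cases "integrable M f")
  case True
  have "\<bar>integral\<^sup>L M f\<bar> \<le> integral\<^sup>L M (\<lambda>x. \<bar>f x\<bar>)" by (rule integral_abs_bound)
  also have "\<dots> \<le> integral\<^sup>L M g" using True g fg by (intro integral_mono_AE) auto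
  finally show ?thesis .
next
  case False
  then have "integral\<^sup>L M f = 0" by (rule not_integrable_integral_eq)
  moreover have "integral\<^sup>L M g \<ge> 0" using fg by (intro integral_nonneg_AE) (auto elim: eventually_mono)
  ultimately show ?thesis by simp
qed

lemma set_integral_abs_bound_dominated:
  fixes f g :: "'a \<Rightarrow> real"
  assumes g: "set_integrable M A g" and fg: "AE x in M. x \<in> A \<longrightarrow> \<bar>f x\<bar> \<le> g x"
  shows "\<bar>(LINT x:A|M. f x)\<bar> \<le> (LINT x:A|M. g x)"
  unfolding set_lebesgue_integral_def
proof (rule integral_abs_bound_dominated)
  show "integrable M (\<lambda>x. indicator A x *\<^sub>R g x)" using g unfolding set_integrable_def .
  show "AE x in M. \<bar>indicator A x *\<^sub>R f x\<bar> \<le> indicator A x *\<^sub>R g x"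
    using fg by eventually_elim (auto split: split_indicator)
qed

lemma set_integral_exp_le_1:
  fixes a s t c :: real
  assumes a: "a \<ge> 0" and st: "s \<le> t" and tc: "t \<le> c"
  shows "set_integrable lborel {s..t} (\<lambda>y. a * exp (a * (y - c)))"
    and "(LINT y:{s..t}|lborel. a * exp (a * (y - c))) \<le> 1"
proof -
  have cont: "continuous_on {s..t} (\<lambda>y. a * exp (a * (y - c)))" by (intro continuous_intros)
  then show "set_integrable lborel {s..t} (\<lambda>y. a * exp (a * (y - c)))"
    by (rule borel_integrable_atLeastAtMost')
  have "(LINT y:{s..t}|lborel. a * exp (a * (y - c))) = exp (a * (t - c)) - exp (a * (s - c))"
    unfolding set_lebesgue_integral_def
  proof (rule integral_FTC_atLeastAtMost[OF st _ cont])
    fix y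
    have "((\<lambda>y. exp (a * (y - c))) has_real_derivative exp (a * (y - c)) * (a * (1 - 0))) (at y)"
      by (intro derivative_eq_intros) auto
    then show "((\<lambda>y. exp (a * (y - c))) has_vector_derivative a * exp (a * (y - c))) (at y within {s..t})"
      by (simp add: has_real_derivative_iff_has_vector_derivative[symmetric]
          has_field_derivative_at_within mult.commute)
  qed
  also have "\<dots> \<le> exp (a * (t - c))" by simp
  also have "\<dots> \<le> 1" using a tc by (simp add: mult_nonneg_nonpos)
  finally show "(LINT y:{s..t}|lborel. a * exp (a * (y - c))) \<le> 1" .
qed

lemma set_integral_exp_neg_le_1:
  fixes a s t c :: real
  assumes a: "a \<ge> 0" and st: "s \<le> t" and cs: "c \<le> s"
  shows "set_integrable lborel {s..t} (\<lambda>y. a * exp (- (a * (y - c))))"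
    and "(LINT y:{s..t}|lborel. a * exp (- (a * (y - c)))) \<le> 1"
proof -
  have cont: "continuous_on {s..t} (\<lambda>y. a * exp (- (a * (y - c))))" by (intro continuous_intros)
  then show "set_integrable lborel {s..t} (\<lambda>y. a * exp (- (a * (y - c))))"
    by (rule borel_integrable_atLeastAtMost')
  have "(LINT y:{s..t}|lborel. a * exp (- (a * (y - c)))) = (- exp (- (a * (t - c)))) - (- exp (- (a * (s - c))))"
    unfolding set_lebesgue_integral_def
  proof (rule integral_FTC_atLeastAtMost[OF st _ cont])
    fix y
    have "((\<lambda>y. - exp (- (a * (y - c)))) has_real_derivative - (exp (- (a * (y - c))) * (- (a * (1 - 0))))) (at y)"
      by (intro derivative_eq_intros) auto
    then show "((\<lambda>y. - exp (- (a * (y - c)))) has_vector_derivative a * exp (- (a * (y - c)))) (at y within {s..t})"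
      by (simp add: has_real_derivative_iff_has_vector_derivative[symmetric]
          has_field_derivative_at_within mult.commute)
  qed
  also have "\<dots> \<le> exp (- (a * (s - c)))" by simp
  also have "\<dots> \<le> 1" using a cs by simp
  finally show "(LINT y:{s..t}|lborel. a * exp (- (a * (y - c)))) \<le> 1" .
qed

section \<open>Comparability of the weight\<close>

locale sigma_weight =
  fixes U :: "real \<Rightarrow> real" and gam B :: real
  assumes U: "cutoff U" and gam: "-3 < gam" "gam \<le> 1"
    and B: "B \<ge> 0" "\<And>s. s \<ge> 0 \<Longrightarrow> \<bar>deriv U s\<bar> \<le> B"
begin

definition Csig :: real where "Csig = 7 + 20 * B"

lemma Csig_ge_7: "Csig \<ge> 7" unfolding Csig_def using B by simp

lemma Sig'_comparable:
  "X \<ge> 0 \<Longrightarrow> z \<ge> 1 \<Longrightarrow> sigma_rate gam z X \<le> Sig' gam U z X \<and> Sig' gam U z X \<le> Csig * sigma_rate gam z X"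
  unfolding Csig_def using Sig'_bounds[OF U gam _ _ B] by blast

lemma sigma_rate_le_1: "X \<ge> 0 \<Longrightarrow> z \<ge> 1 \<Longrightarrow> sigma_rate gam z X \<le> 1"
  unfolding sigma_rate_def using sigma_exp_bounds[OF gam]
  by (intro min.coboundedI1 powr_le_1_if_nonpos) auto

lemma Sig'_le_Csig:
  assumes "X \<ge> 0" "z \<ge> 1"
  shows "Sig' gam U z X \<le> Csig"
proof -
  have "Sig' gam U z X \<le> Csig * sigma_rate gam z X" using Sig'_comparable[OF assms] by simp
  also have "\<dots> \<le> Csig * 1" using sigma_rate_le_1[OF assms] Csig_ge_7 by (intro mult_left_mono) auto
  finally show ?thesis by simp
qed

lemma sigma_rate_doubling:
  assumes X: "X \<ge> 0" and z: "z \<ge> 1" "z' \<ge> 1" "z' \<le> 2 * z"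
  shows "sigma_rate gam z X \<le> 2 * sigma_rate gam z' X"
proof -
  define e where "e = sigma_exp gam - 1"
  have e: "-1 \<le> e" "e \<le> 0" using sigma_exp_bounds[OF gam] by (auto simp: e_def)
  have "z powr e \<le> 2 * (2 powr e * z powr e)"
  proof -
    have "2 powr (-1) \<le> 2 powr e" using e by (intro powr_mono) auto
    then show ?thesis using z by (simp add: powr_minus field_simps)
  qed
  also have "2 powr e * z powr e = (2 * z) powr e" using z by (simp add: powr_mult)
  also have "(2 * z) powr e \<le> z' powr e" using z e by (intro powr_mono2') auto
  moreover have "(1 + X) powr (gam - 1) \<le> 2 * (1 + X) powr (gam - 1)" using X by simp
  ultimately show ?thesis unfolding sigma_rate_def e_def[symmetric] by linarith
qed

lemma Sig'_doubling:
  assumes X: "X \<ge> 0" and z: "z \<ge> 1" "z' \<ge> 1" "z' \<le> 2 * z"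
  shows "Sig' gam U z X \<le> (2 * Csig) * Sig' gam U z' X"
proof -
  have "Sig' gam U z X \<le> Csig * sigma_rate gam z X" using Sig'_comparable[OF X z(1)] by simp
  also have "\<dots> \<le> Csig * (2 * sigma_rate gam z' X)"
    using sigma_rate_doubling[OF X z] Csig_ge_7 by (intro mult_left_mono) auto
  also have "\<dots> \<le> Csig * (2 * Sig' gam U z' X)"
    using Sig'_comparable[OF X z(2)] Csig_ge_7 by (intro mult_left_mono) auto
  finally show ?thesis by simp
qed

lemma ln_Sig'_doubling:
  assumes X: "X \<ge> 0" and z: "z \<ge> 1" "z' \<ge> 1" "z' \<le> 2 * z" "z \<le> 2 * z'"
  shows "\<bar>ln (Sig' gam U z X) - ln (Sig' gam U z' X)\<bar> \<le> ln (2 * Csig)"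
proof -
  have pos: "Sig' gam U z X > 0" "Sig' gam U z' X > 0" using Sig'_pos[OF U gam X] z by auto
  have c: "2 * Csig > 0" using Csig_ge_7 by simp
  have "ln (Sig' gam U z X) \<le> ln ((2 * Csig) * Sig' gam U z' X)"
    "ln (Sig' gam U z' X) \<le> ln ((2 * Csig) * Sig' gam U z X)"
    using Sig'_doubling[OF X z(1,2,3)] Sig'_doubling[OF X z(2,1,4)] pos c by simp_all
  then show ?thesis using pos c by (simp add: ln_mult abs_le_iff)
qed

lemma Sig'_velocity_ratio:
  assumes Xv: "Xv \<ge> 0" and Xw: "Xw \<ge> 0" and l: "l \<ge> 1"
  shows "Sig' gam U l Xv \<le> (Csig * (1 + Xw) powr (1 - gam)) * Sig' gam U l Xw"
proof -
  define P R where "P = l powr (sigma_exp gam - 1)" and "R = (1 + Xw) powr (gam - 1)"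
  have P: "0 < P" "P \<le> 1" unfolding P_def using sigma_exp_bounds[OF gam] powr_le_1_if_nonpos[OF l] l by auto
  have R: "0 < R" "R \<le> 1" unfolding R_def using gam powr_le_1_if_nonpos[of "1 + Xw" "gam - 1"] Xw by auto
  have inv: "(1 + Xw) powr (1 - gam) * R = 1" unfolding R_def using Xw by (simp flip: powr_add)
  have "Sig' gam U l Xv \<le> Csig * sigma_rate gam l Xv" using Sig'_comparable[OF Xv l] by simp
  also have "\<dots> \<le> Csig * P" unfolding sigma_rate_def P_def using Csig_ge_7 by (intro mult_left_mono) auto
  also have "P = (1 + Xw) powr (1 - gam) * (P * R)" using inv by (simp add: algebra_simps)
  also have "P * R \<le> sigma_rate gam l Xw"
    using P R mult_left_le[of R P] mult_left_le_one_le[of R P]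
    unfolding sigma_rate_def P_def[symmetric] R_def[symmetric] by simp
  also have "\<dots> \<le> Sig' gam U l Xw" using Sig'_comparable[OF Xw l] by simp
  finally show ?thesis using Csig_ge_7 Xw by (simp add: algebra_simps mult_left_mono)
qed

lemma ln_Sig'_velocity:
  assumes Xv: "Xv \<ge> 0" and Xw: "Xw \<ge> 0" and l: "l \<ge> 1"
  shows "\<bar>ln (Sig' gam U l Xv) - ln (Sig' gam U l Xw)\<bar> \<le> ln Csig + 4 * (Xv + Xw)"
proof -
  have pos: "Sig' gam U l X > 0" if "X \<ge> 0" for X using Sig'_pos[OF U gam that l] .
  have c: "Csig > 0" using Csig_ge_7 by simp
  have step: "ln (Sig' gam U l X) - ln (Sig' gam U l Y) \<le> ln Csig + 4 * Y" if "X \<ge> 0" "Y \<ge> 0" for X Y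
  proof -
    have "ln ((1 + Y) powr (1 - gam)) = (1 - gam) * ln (1 + Y)" using that by (simp add: ln_powr)
    also have "\<dots> \<le> 4 * Y"
      using gam that ln_add_one_self_le_self[OF that(2)] by (intro mult_mono) auto
    finally have "ln ((1 + Y) powr (1 - gam)) \<le> 4 * Y" .
    moreover have "ln (Sig' gam U l X) \<le> ln ((Csig * (1 + Y) powr (1 - gam)) * Sig' gam U l Y)"
      using Sig'_velocity_ratio[OF that l] pos that c by simp
    moreover have "ln ((Csig * (1 + Y) powr (1 - gam)) * Sig' gam U l Y)
        = ln Csig + ln ((1 + Y) powr (1 - gam)) + ln (Sig' gam U l Y)"
      using pos[OF that(2)] that c by (simp add: ln_mult)
    ultimately show ?thesis by linarith
  qed
  show ?thesis using step[OF Xv Xw] step[OF Xw Xv] Xv Xw by (simp add: abs_le_iff)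
qed

lemma Sig_lipschitz:
  assumes X: "X \<ge> 0" and z: "1 \<le> z" "z \<le> z'"
  shows "\<bar>Sig gam U z' X - Sig gam U z X\<bar> \<le> Csig * (z' - z)"
proof (cases "z = z'")
  case False
  then have "z < z'" using z by simp
  moreover have "\<And>y. z \<le> y \<Longrightarrow> y \<le> z' \<Longrightarrow> ((\<lambda>z. Sig gam U z X) has_real_derivative Sig' gam U y X) (at y)"
    using has_real_derivative_sigma_profile[OF U] X z by auto
  ultimately obtain y where y: "z < y" "y < z'" "Sig gam U z' X - Sig gam U z X = (z' - z) * Sig' gam U y X"
    using MVT2 by blast
  have "0 < Sig' gam U y X" "Sig' gam U y X \<le> Csig"
    using Sig'_pos[OF U gam X] Sig'_le_Csig[OF X] y z by auto
  then show ?thesis using y z by (simp add: abs_mult mult_right_mono mult.commute)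
qed simp

lemma Sig_nonneg:
  assumes X: "X \<ge> 0" and z: "z \<ge> 0"
  shows "Sig gam U z X \<ge> 0"
proof -
  have a: "(1 + X) powr (3 - gam) > 0" "(1 + X) powr (1 - gam) > 0" using X by auto
  then have "0 \<le> U (z / (1 + X) powr (3 - gam))" "U (z / (1 + X) powr (3 - gam)) \<le> 1"
    using cutoff_range[OF U, of "z / (1 + X) powr (3 - gam)"] z by auto
  then show ?thesis unfolding sigma_profile_def using a z by simp
qed

lemma Sig_le:
  assumes X: "X \<ge> 0" and l: "l \<ge> 1"
  shows "Sig gam U l X \<le> 6 * l + 3 * X^2"
proof -
  define u where "u = U (l / (1 + X) powr (3 - gam))"
  have a: "(1 + X) powr (3 - gam) > 0" "(1 + X) powr (1 - gam) \<ge> 1"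
    using X gam by (auto intro: ge_one_powr_ge_zero)
  have u: "0 \<le> u" "u \<le> 1" using cutoff_range[OF U] a l u_def by auto
  have "l powr (sigma_exp gam) \<le> l" using sigma_exp_bounds[OF gam] l powr_mono[of "sigma_exp gam" 1 l] by simp
  moreover have "l / (1 + X) powr (1 - gam) \<le> l" using a l by (simp add: divide_le_eq mult_le_cancel_left1)
  ultimately have "Sig gam U l X \<le> 5 * l * (1 - u) + (l + 3 * X^2) * u"
    unfolding sigma_profile_def u_def[symmetric] using u by (intro add_mono mult_right_mono) auto
  also have "\<dots> = 5 * l - 4 * (l * u) + 3 * (X^2 * u)" by (simp add: algebra_simps)
  also have "\<dots> \<le> 6 * l + 3 * X^2"
  proof -
    have "X^2 * u \<le> X^2" "0 \<le> l * u" using u l by (simp_all add: mult_left_le)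
    then show ?thesis using l by linarith
  qed
  finally show ?thesis .
qed

end

section \<open>Transport along characteristics\<close>

locale transport = sigma_weight +
  fixes m rho T :: real and ub :: "real^3"
  assumes rho: "rho > 0" and T: "T > 0" and ub3: "ub $ 3 = 0"
begin

abbreviation nu where "nu \<equiv> nuf gam rho T ub"

definition Ckappa :: real where "Ckappa = \<bar>m\<bar> * ln (2 * Csig) + 2"

lemma nu_pos: "nu v > 0"
  using nuf_pos[OF gam rho T] .

lemma abs_le_nu_if_bounded:
  assumes K: "\<forall>x\<in>{0<..<A}. \<forall>v. \<bar>f x v / nu v\<bar> \<le> K" and x: "x \<in> {0<..<A}"
  shows "\<bar>f x v\<bar> \<le> K * nu v" and "K \<ge> 0"
proof -
  have "\<bar>f x v / nu v\<bar> \<le> K" using K x by blast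
  then have "\<bar>f x v\<bar> / nu v \<le> K" using nu_pos[of v] by (simp add: abs_div)
  then show "\<bar>f x v\<bar> \<le> K * nu v" using nu_pos[of v] by (simp add: divide_le_eq)
  show "K \<ge> 0" using K x by (meson abs_ge_zero order_trans)
qed

end

locale transport_regime = transport +
  fixes hb delta l A :: real
  assumes hb: "0 < hb" "hb \<le> 1" and delta: "0 < delta" and small: "delta * A * Csig \<le> 1"
    and A: "A > 0" and l: "l \<ge> 1"
begin

abbreviation kap where "kap \<equiv> kappa m hb gam U delta l rho T ub"

lemma shifted_position_bounds:
  assumes "0 \<le> x" "x \<le> A"
  shows "1 \<le> delta * x + l" "delta * x + l \<le> 2 * l" "l \<le> 2 * (delta * x + l)" "Csig * (delta * x) \<le> 1"
proof -
  have "Csig * (delta * x) \<le> Csig * (delta * A)"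
    using assms delta Csig_ge_7 by (intro mult_left_mono) auto
  then show dx: "Csig * (delta * x) \<le> 1" using small by (simp add: algebra_simps)
  have "0 \<le> delta * x" using assms delta by simp
  moreover have "delta * x \<le> 1"
    using dx Csig_ge_7 \<open>0 \<le> delta * x\<close> mult_right_mono[of 1 Csig "delta * x"] by simp
  ultimately show "1 \<le> delta * x + l" "delta * x + l \<le> 2 * l" "l \<le> 2 * (delta * x + l)" using l by simp_all
qed

lemma kappa_oscillation:
  assumes x: "0 \<le> x" "x \<le> A" and X: "X \<ge> 0"
  shows "\<bar>(m / 2) * (ln (Sig' gam U (delta * x + l) X) - ln (Sig' gam U l X))\<bar> \<le> \<bar>m\<bar> / 2 * ln (2 * Csig)"
    and "\<bar>hb * (Sig gam U (delta * x + l) X - Sig gam U l X)\<bar> \<le> 1"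
proof -
  note z = shifted_position_bounds[OF x]
  show "\<bar>(m / 2) * (ln (Sig' gam U (delta * x + l) X) - ln (Sig' gam U l X))\<bar> \<le> \<bar>m\<bar> / 2 * ln (2 * Csig)"
    using ln_Sig'_doubling[OF X z(1) l z(3) z(2)] by (simp add: abs_mult mult_left_mono)
  have "\<bar>Sig gam U (delta * x + l) X - Sig gam U l X\<bar> \<le> Csig * (delta * x)"
    using Sig_lipschitz[OF X l, of "delta * x + l"] x delta by simp
  then have "\<bar>Sig gam U (delta * x + l) X - Sig gam U l X\<bar> \<le> 1" using z(4) by linarith
  then have "hb * \<bar>Sig gam U (delta * x + l) X - Sig gam U l X\<bar> \<le> hb * 1"
    using hb by (intro mult_left_mono) auto
  moreover have "\<bar>hb * (Sig gam U (delta * x + l) X - Sig gam U l X)\<bar>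
      = hb * \<bar>Sig gam U (delta * x + l) X - Sig gam U l X\<bar>" using hb by (simp add: abs_mult)
  ultimately show "\<bar>hb * (Sig gam U (delta * x + l) X - Sig gam U l X)\<bar> \<le> 1" using hb by linarith
qed

lemma kappa_diff_le:
  assumes x: "0 \<le> x" "x \<le> A" and x': "0 \<le> x'" "x' \<le> A"
  shows "- (kap x v - kap x' w) \<le> Ckappa - x * (nu v / v $ 3) + x' * (nu w / w $ 3)"
proof -
  define P1 P2 where
    "P1 = (m / 2) * (ln (Sig' gam U (delta * x + l) (norm (v - ub))) - ln (Sig' gam U l (norm (v - ub))))"
    and "P2 = hb * (Sig gam U (delta * x + l) (norm (v - ub)) - Sig gam U l (norm (v - ub)))"
  define Q1 Q2 where
    "Q1 = (m / 2) * (ln (Sig' gam U (delta * x' + l) (norm (w - ub))) - ln (Sig' gam U l (norm (w - ub))))"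
    and "Q2 = hb * (Sig gam U (delta * x' + l) (norm (w - ub)) - Sig gam U l (norm (w - ub)))"
  have "- (kap x v - kap x' w) = P1 + P2 - x * (nu v / v $ 3) - Q1 - Q2 + x' * (nu w / w $ 3)"
    unfolding kappa_eq[OF U gam delta l x(1)] kappa_eq[OF U gam delta l x'(1)] P1_def P2_def Q1_def Q2_def
    by (simp add: algebra_simps)
  moreover have "\<bar>P1\<bar> \<le> \<bar>m\<bar> / 2 * ln (2 * Csig)" "\<bar>P2\<bar> \<le> 1" "\<bar>Q1\<bar> \<le> \<bar>m\<bar> / 2 * ln (2 * Csig)" "\<bar>Q2\<bar> \<le> 1"
    unfolding P1_def P2_def Q1_def Q2_def using kappa_oscillation[OF x] kappa_oscillation[OF x'] by auto
  ultimately show ?thesis unfolding Ckappa_def by (auto simp: abs_le_iff)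
qed

lemma exp_kappa_diff_le:
  assumes x: "0 \<le> x" "x \<le> A" and x': "0 \<le> x'" "x' \<le> A"
  shows "exp (- (kap x v - kap x' w)) \<le> exp Ckappa * exp (- x * (nu v / v $ 3)) * exp (x' * (nu w / w $ 3))"
  using kappa_diff_le[OF x x', of v w] by (simp flip: exp_add)

lemma exp_kappa_diff_le_outgoing:
  assumes x: "0 \<le> x" "x \<le> A" and x': "0 \<le> x'" "x' \<le> A" and v: "v $ 3 > 0"
  shows "exp (- (kap x v - kap x' w)) \<le> exp Ckappa * exp (x' * (nu w / w $ 3))"
proof -
  have "exp (- (kap x v - kap x' w)) \<le> exp Ckappa * exp (- x * (nu v / v $ 3)) * exp (x' * (nu w / w $ 3))"
    by (rule exp_kappa_diff_le[OF x x'])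
  also have "\<dots> \<le> exp Ckappa * 1 * exp (x' * (nu w / w $ 3))"
    using x v nu_pos[of v] by (intro mult_right_mono mult_left_mono) auto
  finally show ?thesis by simp
qed

text \<open>With \<open>|f| \<le> K \<nu>\<close> the transport kernel is bounded by the density of mass at most 1,
  \<open>a exp (-a|x - x'|)\<close>, \<open>a = \<nu>/|v\<^sub>3|\<close>.\<close>

lemma Uop_bound_forward:
  assumes K: "\<forall>x\<in>{0<..<A}. \<forall>v. \<bar>f x v / nu v\<bar> \<le> K" and x: "x \<in> {0<..<A}" and v: "v $ 3 > 0"
  shows "\<bar>Uop m hb gam U delta l rho T ub A f x v\<bar> \<le> exp Ckappa * K"
proof -
  define a where "a = nu v / v $ 3"
  have a: "a \<ge> 0" unfolding a_def using nu_pos[of v] v by simp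
  have K0: "K \<ge> 0" using abs_le_nu_if_bounded(2)[OF K x] .
  have "\<bar>LINT x':{0..x}|lborel. exp (- (kap x v - kap x' v)) * (1 / v $ 3) * f x' v\<bar>
      \<le> (LINT x':{0..x}|lborel. exp Ckappa * K * (a * exp (a * (x' - x))))"
  proof (rule set_integral_abs_bound_dominated)
    show "set_integrable lborel {0..x} (\<lambda>x'. exp Ckappa * K * (a * exp (a * (x' - x))))"
      using set_integral_exp_le_1(1)[OF a, of 0 x x] x by auto
    have "AE x' in lborel. x' \<noteq> 0" by (rule AE_lborel_singleton)
    then show "AE x' in lborel. x' \<in> {0..x} \<longrightarrow> \<bar>exp (- (kap x v - kap x' v)) * (1 / v $ 3) * f x' v\<bar>
        \<le> exp Ckappa * K * (a * exp (a * (x' - x)))"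
    proof (eventually_elim, intro impI)
      fix x' assume "x' \<noteq> 0" "x' \<in> {0..x}"
      then have x': "x' \<in> {0<..<A}" using x by auto
      have "\<bar>exp (- (kap x v - kap x' v)) * (1 / v $ 3) * f x' v\<bar>
          \<le> (exp Ckappa * exp (- x * a) * exp (x' * a)) * (1 / v $ 3) * (K * nu v)"
        using exp_kappa_diff_le[of x x' v v] x x' abs_le_nu_if_bounded(1)[OF K x'] v
        by (intro abs_mult_le) (auto simp: a_def)
      also have "\<dots> = exp Ckappa * K * (a * exp (a * (x' - x)))"
        using v by (simp add: a_def field_simps flip: exp_add)
      finally show "\<bar>exp (- (kap x v - kap x' v)) * (1 / v $ 3) * f x' v\<bar>
          \<le> exp Ckappa * K * (a * exp (a * (x' - x)))" .
    qed
  qed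
  also have "\<dots> = exp Ckappa * K * (LINT x':{0..x}|lborel. a * exp (a * (x' - x)))" by simp
  also have "\<dots> \<le> exp Ckappa * K * 1"
    using set_integral_exp_le_1(2)[OF a, of 0 x x] x K0 by (intro mult_left_mono) auto
  finally show ?thesis unfolding Uop_def Let_def using v by simp
qed

lemma Uop_bound_backward:
  assumes K: "\<forall>x\<in>{0<..<A}. \<forall>v. \<bar>f x v / nu v\<bar> \<le> K" and x: "x \<in> {0<..<A}" and v: "v $ 3 < 0"
  shows "\<bar>Uop m hb gam U delta l rho T ub A f x v\<bar> \<le> exp Ckappa * K"
proof -
  define a where "a = nu v / (- v $ 3)"
  have a: "a \<ge> 0" unfolding a_def using nu_pos[of v] v by (intro divide_nonneg_pos) auto
  have K0: "K \<ge> 0" using abs_le_nu_if_bounded(2)[OF K x] .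
  have "\<bar>LINT x':{x..A}|lborel. exp (- (kap x v - kap x' v)) * (1 / v $ 3) * f x' v\<bar>
      \<le> (LINT x':{x..A}|lborel. exp Ckappa * K * (a * exp (- (a * (x' - x)))))"
  proof (rule set_integral_abs_bound_dominated)
    show "set_integrable lborel {x..A} (\<lambda>x'. exp Ckappa * K * (a * exp (- (a * (x' - x)))))"
      using set_integral_exp_neg_le_1(1)[OF a, of x A x] x by auto
    have "AE x' in lborel. x' \<noteq> A" by (rule AE_lborel_singleton)
    then show "AE x' in lborel. x' \<in> {x..A} \<longrightarrow> \<bar>exp (- (kap x v - kap x' v)) * (1 / v $ 3) * f x' v\<bar>
        \<le> exp Ckappa * K * (a * exp (- (a * (x' - x))))"
    proof (eventually_elim, intro impI)
      fix x' assume "x' \<noteq> A" "x' \<in> {x..A}"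
      then have x': "x' \<in> {0<..<A}" using x by auto
      have "\<bar>exp (- (kap x v - kap x' v)) * (1 / v $ 3) * f x' v\<bar>
          = \<bar>exp (- (kap x v - kap x' v)) * (1 / (- v $ 3)) * f x' v\<bar>" by (simp add: abs_mult)
      also have "\<dots> \<le> (exp Ckappa * exp (x * a) * exp (- x' * a)) * (1 / (- v $ 3)) * (K * nu v)"
        using exp_kappa_diff_le[of x x' v v] x x' abs_le_nu_if_bounded(1)[OF K x'] v nu_pos[of v]
        by (intro abs_mult_le) (auto simp: a_def divide_nonneg_neg)
      also have "\<dots> = exp Ckappa * K * (a * exp (- (a * (x' - x))))"
        using v by (simp add: a_def field_simps flip: exp_add)
      finally show "\<bar>exp (- (kap x v - kap x' v)) * (1 / v $ 3) * f x' v\<bar>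
          \<le> exp Ckappa * K * (a * exp (- (a * (x' - x))))" .
    qed
  qed
  also have "\<dots> = exp Ckappa * K * (LINT x':{x..A}|lborel. a * exp (- (a * (x' - x))))" by simp
  also have "\<dots> \<le> exp Ckappa * K * 1"
    using set_integral_exp_neg_le_1(2)[OF a, of x A x] x K0 by (intro mult_left_mono) auto
  finally show ?thesis unfolding Uop_def Let_def using v by simp
qed

lemma Uop_bound:
  assumes K: "\<forall>x\<in>{0<..<A}. \<forall>v. \<bar>f x v / nu v\<bar> \<le> K" and x: "x \<in> {0<..<A}"
  shows "\<bar>Uop m hb gam U delta l rho T ub A f x v\<bar> \<le> exp Ckappa * K"
proof (cases "v $ 3 = 0")
  case True
  then show ?thesis using abs_le_nu_if_bounded(2)[OF K x] by (simp add: Uop_def)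
next
  case False
  then show ?thesis using Uop_bound_forward[OF K x] Uop_bound_backward[OF K x] by (meson linorder_neqE)
qed

end

section \<open>Diffuse reflection\<close>

lemma R0_nth_3: "R0 v $ 3 = - (v $ 3)"
  unfolding R0_def by simp

lemma power2_norm_diff_ge:
  fixes v a b :: "'a::real_normed_vector"
  shows "(norm (v - b))^2 \<ge> (norm (v - a))^2 - 2 * norm (a - b) * norm (v - a)"
proof -
  define X d where "X = norm (v - a)" and "d = norm (a - b)"
  have "X \<le> norm (v - b) + d"
    using norm_triangle_ineq[of "v - b" "b - a"] by (simp add: X_def d_def norm_minus_commute)
  show ?thesis
  proof (cases "X \<le> d")
    case True
    have "0 \<le> X" "0 \<le> d" by (simp_all add: X_def d_def)
    then have "X * X \<le> (2 * d) * X" using True by (intro mult_right_mono) auto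
    then have "X^2 - 2 * d * X \<le> 0" by (simp add: power2_eq_square)
    then show ?thesis unfolding X_def d_def by (smt (verit) zero_le_power2)
  next
    case False
    then have "(X - d)^2 \<le> (norm (v - b))^2" using \<open>X \<le> norm (v - b) + d\<close> by (simp add: power_mono)
    moreover have "(X - d)^2 \<ge> X^2 - 2 * d * X" by (simp add: power2_eq_square algebra_simps)
    ultimately show ?thesis unfolding X_def d_def by linarith
  qed
qed

locale diffuse_wall = transport +
  fixes Tw alpha :: real and uw :: "real^3"
  assumes Tw: "0 < Tw" "Tw < 2 * T" and alpha: "0 \<le> alpha" "alpha \<le> 1"
begin

definition aw :: real where "aw = 1 / (2 * Tw) - 1 / (4 * T)"
definition bw :: real where "bw = 2 * \<bar>m\<bar> + norm (ub - uw) / Tw"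
definition gW :: "real^3 \<Rightarrow> real" where
  "gW w = exp ((2 * \<bar>m\<bar> + 1) * norm (w - ub) - (1 / (4 * T)) * (norm (w - ub))^2)"
definition Cwall :: real where
  "Cwall = Mwall Tw uw uw * exp (1 + bw^2 / (2 * aw)) * exp (\<bar>m\<bar> / 2 * ln Csig) * exp Ckappa
     * integral\<^sup>L lborel gW"

lemma aw_pos: "aw > 0"
  unfolding aw_def using Tw T by (simp add: field_simps)

lemma integrable_gW: "integrable lborel gW"
  unfolding gW_def using T by (intro integrable_exp_linear_minus_quadratic_norm) simp

lemma integral_gW_nonneg: "integral\<^sup>L lborel gW \<ge> 0"
  unfolding gW_def by simp

lemma Cwall_nonneg: "Cwall \<ge> 0"
  unfolding Cwall_def using integral_gW_nonneg Tw by (simp add: Mwall_def)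

end

locale wall_regime = transport_regime + diffuse_wall +
  assumes hb_l: "hb \<le> 1 / (6 * l)" and hb_aw: "hb \<le> aw / 6"
begin

abbreviation Ms where "Ms \<equiv> Msig hb gam U delta l rho T ub"
abbreviation sx where "sx \<equiv> sigmax gam U delta l ub"

lemma sqrt_Msig_eq:
  "sqrt (Ms w) = sqrt (Maxw rho T ub ub) * exp (- ((norm (w - ub))^2) / (4 * T))
     * exp (- hb * Sig gam U l (norm (w - ub)))"
proof -
  have "Ms w = Maxw rho T ub ub * exp (- ((norm (w - ub))^2) / (2 * T)) * exp (- 2 * hb * Sig gam U l (norm (w - ub)))"
    unfolding Msig_def sigmaf_eq_Sig by (subst Maxw_eq) simp
  then show ?thesis by (simp add: real_sqrt_mult real_sqrt_exp)
qed

lemma sqrt_Msig_pos: "sqrt (Ms w) > 0"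
  unfolding sqrt_Msig_eq using Maxw_pos[OF rho T] by simp

lemma sqrt_Msig_le: "sqrt (Ms w) \<le> sqrt (Maxw rho T ub ub) * exp (- ((norm (w - ub))^2) / (4 * T))"
proof -
  have "exp (- hb * Sig gam U l (norm (w - ub))) \<le> 1"
    using Sig_nonneg[of "norm (w - ub)" l] l hb by simp
  then show ?thesis unfolding sqrt_Msig_eq using Maxw_pos[OF rho T] by (simp add: mult_left_le)
qed

lemma hb_Sig_le: "X \<ge> 0 \<Longrightarrow> hb * Sig gam U l X \<le> 1 + (aw / 2) * X^2"
proof -
  assume X: "X \<ge> 0"
  have "hb * Sig gam U l X \<le> hb * (6 * l + 3 * X^2)"
    using Sig_le[OF X l] hb by (intro mult_left_mono) auto
  also have "\<dots> = hb * (6 * l) + (3 * hb) * X^2" by (simp add: algebra_simps)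
  also have "hb * (6 * l) \<le> 1" using hb_l l by (simp add: field_simps)
  also have "(3 * hb) * X^2 \<le> (aw / 2) * X^2" using hb_aw by (intro mult_right_mono) auto
  finally show ?thesis by simp
qed

text \<open>\<open>Tw < 2 T\<close> makes \<open>aw\<close> positive, so together with \<open>hb_Sig_le\<close> the prefactor is Gaussian
  in \<open>v\<close> and absorbs the exponential growth of the \<open>\<sigma>\<^sub>x\<close> ratio.\<close>

lemma wall_prefactor_le:
  "Mwall Tw uw v / sqrt (Ms v) * exp (2 * \<bar>m\<bar> * norm (v - ub))
     \<le> Mwall Tw uw uw / sqrt (Maxw rho T ub ub) * exp (1 + bw^2 / (2 * aw))"
proof -
  define X d where "X = norm (v - ub)" and "d = norm (ub - uw)"
  have "- ((norm (v - uw))^2 / (2 * Tw)) \<le> - ((X^2 - 2 * d * X) / (2 * Tw))"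
    using power2_norm_diff_ge[of v ub uw] Tw unfolding X_def d_def by (simp add: divide_right_mono)
  then have "X^2 / (4 * T) + hb * Sig gam U l X - (norm (v - uw))^2 / (2 * Tw) + 2 * \<bar>m\<bar> * X
      \<le> X^2 / (4 * T) + (1 + (aw / 2) * X^2) - (X^2 - 2 * d * X) / (2 * Tw) + 2 * \<bar>m\<bar> * X"
    using hb_Sig_le[of X] by (simp add: X_def)
  also have "\<dots> = 1 + (bw * X - (aw / 2) * X^2)"
    unfolding aw_def bw_def d_def using Tw T by (simp add: field_simps power2_eq_square)
  also have "\<dots> \<le> 1 + bw^2 / (2 * aw)"
    using linear_minus_quadratic_le[of "aw / 2" bw X] aw_pos by simp
  finally have E: "X^2 / (4 * T) + hb * Sig gam U l X - (norm (v - uw))^2 / (2 * Tw) + 2 * \<bar>m\<bar> * X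
      \<le> 1 + bw^2 / (2 * aw)" .
  have "Mwall Tw uw v / sqrt (Ms v) * exp (2 * \<bar>m\<bar> * X)
      = Mwall Tw uw uw / sqrt (Maxw rho T ub ub)
        * exp (X^2 / (4 * T) + hb * Sig gam U l X - (norm (v - uw))^2 / (2 * Tw) + 2 * \<bar>m\<bar> * X)"
    unfolding Mwall_def sqrt_Msig_eq X_def using Maxw_pos[OF rho T, of ub ub]
    by (simp add: exp_add[symmetric] exp_diff[symmetric] exp_minus field_simps)
  also have "\<dots> \<le> Mwall Tw uw uw / sqrt (Maxw rho T ub ub) * exp (1 + bw^2 / (2 * aw))"
    using E Maxw_pos[OF rho T, of ub ub] Tw by (intro mult_left_mono) (auto simp: Mwall_def)
  finally show ?thesis unfolding X_def .
qed

definition sigmax_ratio_bound :: "real^3 \<Rightarrow> real^3 \<Rightarrow> real" where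
  "sigmax_ratio_bound v w =
     exp (\<bar>m\<bar> / 2 * ln Csig) * exp (2 * \<bar>m\<bar> * norm (v - ub)) * exp (2 * \<bar>m\<bar> * norm (w - ub))"

definition wall_weight :: "real^3 \<Rightarrow> real \<Rightarrow> real" where
  "wall_weight v K =
     exp (\<bar>m\<bar> / 2 * ln Csig) * exp (2 * \<bar>m\<bar> * norm (v - ub)) * exp Ckappa * K * sqrt (Maxw rho T ub ub)"

lemma sigmax_ratio_le: "\<bar>sx 0 v powr (m / 2) / sx 0 w powr (m / 2)\<bar> \<le> sigmax_ratio_bound v w"
proof -
  define Gv Gw where "Gv = Sig' gam U l (norm (v - ub))" and "Gw = Sig' gam U l (norm (w - ub))"
  have pos: "Gv > 0" "Gw > 0" unfolding Gv_def Gw_def using Sig'_pos[OF U gam _ l] by auto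
  have ratio: "(delta * a) powr e / (delta * b) powr e = exp (e * (ln a - ln b))"
    if "a > 0" "b > 0" for a b e
    using that delta by (simp add: powr_def ln_mult exp_diff[symmetric] algebra_simps)
  have "sx 0 v = delta * Gv" "sx 0 w = delta * Gw"
    unfolding Gv_def Gw_def using sigmax_eq[OF U, of delta 0 l] l by simp_all
  then have "sx 0 v powr (m / 2) / sx 0 w powr (m / 2) = exp ((m / 2) * (ln Gv - ln Gw))"
    using ratio[OF pos] by simp
  moreover have "(m / 2) * (ln Gv - ln Gw) \<le> \<bar>m\<bar> / 2 * \<bar>ln Gv - ln Gw\<bar>"
    by (simp add: abs_mult[symmetric] abs_ge_self)
  moreover have "\<dots> \<le> \<bar>m\<bar> / 2 * (ln Csig + 4 * (norm (v - ub) + norm (w - ub)))"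
    unfolding Gv_def Gw_def using ln_Sig'_velocity[of "norm (v - ub)" "norm (w - ub)" l] l
    by (intro mult_left_mono) auto
  ultimately show ?thesis
    unfolding sigmax_ratio_bound_def by (simp add: algebra_simps flip: exp_add)
qed

lemma wall_integrand_le:
  assumes K: "K \<ge> 0"
  shows "sigmax_ratio_bound v w * exp Ckappa * K * (sqrt (Maxw rho T ub ub) * exp (- ((norm (w - ub))^2) / (4 * T)))
      * \<bar>w $ 3\<bar> \<le> wall_weight v K * gW w"
proof -
  define X where "X = norm (w - ub)"
  have "\<bar>w $ 3\<bar> \<le> X" using component_le_norm_cart[of "w - ub" 3] ub3 by (simp add: X_def)
  then have "\<bar>w $ 3\<bar> \<le> exp X" using exp_ge_add_one_self[of X] by linarith
  then have "exp (2 * \<bar>m\<bar> * X) * exp (- (X^2) / (4 * T)) * \<bar>w $ 3\<bar>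
      \<le> exp (2 * \<bar>m\<bar> * X) * exp (- (X^2) / (4 * T)) * exp X" by (intro mult_left_mono) auto
  also have "\<dots> = gW w" unfolding gW_def X_def[symmetric] by (simp add: algebra_simps flip: exp_add)
  finally have "wall_weight v K * (exp (2 * \<bar>m\<bar> * X) * exp (- (X^2) / (4 * T)) * \<bar>w $ 3\<bar>)
      \<le> wall_weight v K * gW w"
    using K Maxw_pos[OF rho T, of ub ub] by (intro mult_left_mono) (auto simp: wall_weight_def)
  then show ?thesis unfolding sigmax_ratio_bound_def wall_weight_def X_def by (simp add: algebra_simps)
qed

lemma wall_term_bound:
  assumes K: "K \<ge> 0" and F: "\<And>w. w $ 3 < 0 \<Longrightarrow> \<bar>F w\<bar> \<le> wall_weight v K * gW w"
  shows "\<bar>alpha * Mwall Tw uw v / sqrt (Ms v) * (\<integral>w\<in>{w. w $ 3 < 0}. F w \<partial>lborel)\<bar> \<le> alpha * Cwall * K"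
proof -
  have W: "wall_weight v K \<ge> 0" using K Maxw_pos[OF rho T, of ub ub] by (simp add: wall_weight_def)
  have M: "Mwall Tw uw v / sqrt (Ms v) \<ge> 0" using sqrt_Msig_pos[of v] Tw by (simp add: Mwall_def)
  have "\<bar>\<integral>w\<in>{w. w $ 3 < 0}. F w \<partial>lborel\<bar> \<le> integral\<^sup>L lborel (\<lambda>w. wall_weight v K * gW w)"
    unfolding set_lebesgue_integral_def
  proof (rule integral_abs_bound_dominated)
    show "integrable lborel (\<lambda>w. wall_weight v K * gW w)" using integrable_gW by simp
    show "AE w in lborel. \<bar>indicator {w. w $ 3 < 0} w *\<^sub>R F w\<bar> \<le> wall_weight v K * gW w"
      using F W by (intro AE_I2) (simp add: gW_def split: split_indicator)
  qed
  also have "\<dots> = wall_weight v K * integral\<^sup>L lborel gW" by simp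
  finally have I: "\<bar>\<integral>w\<in>{w. w $ 3 < 0}. F w \<partial>lborel\<bar> \<le> wall_weight v K * integral\<^sup>L lborel gW" .
  have "\<bar>alpha * Mwall Tw uw v / sqrt (Ms v) * (\<integral>w\<in>{w. w $ 3 < 0}. F w \<partial>lborel)\<bar>
      \<le> alpha * (Mwall Tw uw v / sqrt (Ms v)) * (wall_weight v K * integral\<^sup>L lborel gW)"
  proof -
    have "\<bar>alpha * Mwall Tw uw v / sqrt (Ms v) * (\<integral>w\<in>{w. w $ 3 < 0}. F w \<partial>lborel)\<bar>
        = alpha * (Mwall Tw uw v / sqrt (Ms v)) * \<bar>\<integral>w\<in>{w. w $ 3 < 0}. F w \<partial>lborel\<bar>"
      using alpha sqrt_Msig_pos[of v] Tw by (simp add: abs_mult Mwall_def)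
    moreover have "alpha * (Mwall Tw uw v / sqrt (Ms v)) * \<bar>\<integral>w\<in>{w. w $ 3 < 0}. F w \<partial>lborel\<bar>
        \<le> alpha * (Mwall Tw uw v / sqrt (Ms v)) * (wall_weight v K * integral\<^sup>L lborel gW)"
      using I alpha M by (intro mult_left_mono mult_nonneg_nonneg) auto
    ultimately show ?thesis by linarith
  qed
  also have "\<dots> = alpha * (Mwall Tw uw v / sqrt (Ms v) * exp (2 * \<bar>m\<bar> * norm (v - ub)))
      * (sqrt (Maxw rho T ub ub) * (exp (\<bar>m\<bar> / 2 * ln Csig) * exp Ckappa * integral\<^sup>L lborel gW * K))"
    unfolding wall_weight_def by (simp add: algebra_simps)
  also have "\<dots> \<le> alpha * (Mwall Tw uw uw / sqrt (Maxw rho T ub ub) * exp (1 + bw^2 / (2 * aw)))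
      * (sqrt (Maxw rho T ub ub) * (exp (\<bar>m\<bar> / 2 * ln Csig) * exp Ckappa * integral\<^sup>L lborel gW * K))"
    using wall_prefactor_le[of v] alpha K integral_gW_nonneg Maxw_pos[OF rho T, of ub ub]
    by (intro mult_right_mono mult_left_mono) auto
  also have "\<dots> = alpha * Cwall * K"
    unfolding Cwall_def using Maxw_pos[OF rho T, of ub ub] by (simp add: field_simps)
  finally show ?thesis .
qed


lemma YA_bound_pos:
  assumes fA: "\<forall>v. \<bar>f A v\<bar> \<le> K" and x: "x \<in> {0<..<A}" and v: "v $ 3 > 0"
  shows "\<bar>YA m hb gam U delta l rho T ub Tw uw alpha A f x v\<bar> \<le> (exp Ckappa + Cwall) * K"
proof -
  have K: "K \<ge> 0" using fA by (meson abs_ge_zero order_trans)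
  have x0: "0 \<le> x" "x \<le> A" and A0: "0 \<le> A" "A \<le> A" using x A by auto
  have E: "exp (kap A w - kap x v) \<le> exp Ckappa" if "w $ 3 < 0" for w
  proof -
    have "exp (kap A w - kap x v) = exp (- (kap x v - kap A w))" by simp
    also have "\<dots> \<le> exp Ckappa * exp (A * (nu w / w $ 3))" by (rule exp_kappa_diff_le_outgoing[OF x0 A0 v])
    also have "\<dots> \<le> exp Ckappa * 1"
      using that nu_pos[of w] A by (intro mult_left_mono) (auto simp: mult_nonneg_nonpos divide_pos_neg less_imp_le)
    finally show ?thesis by simp
  qed
  define IY where "IY = (\<integral>w\<in>{w. w $ 3 < 0}. (- w $ 3) * (sx 0 v powr (m / 2) / sx 0 w powr (m / 2))
    * exp (kap A w - kap x v) * f A w * sqrt (Ms w) \<partial>lborel)"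
  have Y: "YA m hb gam U delta l rho T ub Tw uw alpha A f x v
      = (1 - alpha) * exp (kap A (R0 v) - kap x v) * f A (R0 v) + alpha * Mwall Tw uw v / sqrt (Ms v) * IY"
    unfolding YA_def Let_def IY_def using v by simp
  have "\<bar>(1 - alpha) * exp (kap A (R0 v) - kap x v) * f A (R0 v)\<bar> \<le> (1 - alpha) * exp Ckappa * K"
    using E[of "R0 v"] v fA alpha unfolding R0_nth_3 by (intro abs_mult_le) (auto simp: abs_mult)
  moreover have "\<bar>alpha * Mwall Tw uw v / sqrt (Ms v) * IY\<bar> \<le> alpha * Cwall * K"
    unfolding IY_def
  proof (rule wall_term_bound[OF K])
    fix w :: "real^3" assume w: "w $ 3 < 0"
    have "\<bar>(- w $ 3) * (sx 0 v powr (m / 2) / sx 0 w powr (m / 2)) * exp (kap A w - kap x v) * f A w * sqrt (Ms w)\<bar>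
       \<le> \<bar>w $ 3\<bar> * sigmax_ratio_bound v w * exp Ckappa * K
         * (sqrt (Maxw rho T ub ub) * exp (- ((norm (w - ub))^2) / (4 * T)))"
      using sigmax_ratio_le[of v w] E[OF w] fA sqrt_Msig_le[of w] sqrt_Msig_pos[of w]
      by (intro abs_mult_le) auto
    also have "\<dots> \<le> wall_weight v K * gW w"
      using wall_integrand_le[OF K, of v w] by (simp add: algebra_simps)
    finally show "\<bar>(- w $ 3) * (sx 0 v powr (m / 2) / sx 0 w powr (m / 2)) * exp (kap A w - kap x v)
        * f A w * sqrt (Ms w)\<bar> \<le> wall_weight v K * gW w" .
  qed
  ultimately have "\<bar>YA m hb gam U delta l rho T ub Tw uw alpha A f x v\<bar> \<le> (1 - alpha) * exp Ckappa * K + alpha * Cwall * K"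
    unfolding Y by linarith
  also have "\<dots> \<le> exp Ckappa * K + Cwall * K"
    using alpha K Cwall_nonneg by (intro add_mono) (auto simp: mult_left_le_one_le mult_right_mono)
  finally show ?thesis by (simp add: algebra_simps)
qed

lemma YA_bound_neg:
  assumes fA: "\<forall>v. \<bar>f A v\<bar> \<le> K" and x: "x \<in> {0<..<A}" and v: "v $ 3 < 0"
  shows "\<bar>YA m hb gam U delta l rho T ub Tw uw alpha A f x v\<bar> \<le> (exp Ckappa + Cwall) * K"
proof -
  have K: "K \<ge> 0" using fA by (meson abs_ge_zero order_trans)
  have "exp (- (kap x v - kap A v)) \<le> exp Ckappa * exp (- x * (nu v / v $ 3)) * exp (A * (nu v / v $ 3))"
    using exp_kappa_diff_le[of x A v v] x A by auto
  also have "\<dots> = exp Ckappa * exp ((A - x) * (nu v / v $ 3))" using v by (simp add: field_simps flip: exp_add)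
  also have "\<dots> \<le> exp Ckappa"
    using x v nu_pos[of v] by (simp add: mult_nonneg_nonpos divide_pos_neg less_imp_le)
  finally have "\<bar>exp (kap A v - kap x v) * f A v\<bar> \<le> exp Ckappa * K"
    using fA by (intro abs_mult_le) auto
  also have "\<dots> \<le> (exp Ckappa + Cwall) * K" using Cwall_nonneg K by (simp add: algebra_simps)
  finally show ?thesis unfolding YA_def Let_def using v by simp
qed

lemma YA_bound:
  assumes fA: "\<forall>v. \<bar>f A v\<bar> \<le> K" and x: "x \<in> {0<..<A}" and v: "v $ 3 \<noteq> 0"
  shows "\<bar>YA m hb gam U delta l rho T ub Tw uw alpha A f x v\<bar> \<le> (exp Ckappa + Cwall) * K"
  using YA_bound_pos[where f = f, OF fA x] YA_bound_neg[where f = f, OF fA x] v by (meson linorder_neqE)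

lemma Zop_specular_bound:
  assumes K: "\<forall>x\<in>{0<..<A}. \<forall>v. \<bar>f x v / nu v\<bar> \<le> K" and x: "x \<in> {0<..<A}" and v: "v $ 3 > 0"
  shows "\<bar>LINT x':{0..A}|lborel. exp (- (kap x v - kap x' (R0 v))) * (1 / v $ 3) * f x' (R0 v)\<bar>
    \<le> exp Ckappa * K"
proof -
  define a where "a = nu (R0 v) / v $ 3"
  have a: "a \<ge> 0" unfolding a_def using nu_pos[of "R0 v"] v by simp
  have K0: "K \<ge> 0" using abs_le_nu_if_bounded(2)[OF K x] .
  have "\<bar>LINT x':{0..A}|lborel. exp (- (kap x v - kap x' (R0 v))) * (1 / v $ 3) * f x' (R0 v)\<bar>
      \<le> (LINT x':{0..A}|lborel. exp Ckappa * K * (a * exp (- (a * (x' - 0)))))"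
  proof (rule set_integral_abs_bound_dominated)
    show "set_integrable lborel {0..A} (\<lambda>x'. exp Ckappa * K * (a * exp (- (a * (x' - 0)))))"
      using set_integral_exp_neg_le_1(1)[OF a, of 0 A 0] A by auto
    have "AE x' in lborel. x' \<noteq> 0 \<and> x' \<noteq> A"
      using AE_lborel_singleton[of 0] AE_lborel_singleton[of A] by eventually_elim simp
    then show "AE x' in lborel. x' \<in> {0..A} \<longrightarrow> \<bar>exp (- (kap x v - kap x' (R0 v))) * (1 / v $ 3) * f x' (R0 v)\<bar>
        \<le> exp Ckappa * K * (a * exp (- (a * (x' - 0))))"
    proof (eventually_elim, intro impI)
      fix x' assume "x' \<noteq> 0 \<and> x' \<noteq> A" "x' \<in> {0..A}"
      then have x': "x' \<in> {0<..<A}" by auto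
      have "exp (- (kap x v - kap x' (R0 v))) \<le> exp Ckappa * exp (- (a * (x' - 0)))"
        using exp_kappa_diff_le_outgoing[of x x' v "R0 v"] x x' v unfolding R0_nth_3 a_def by (simp add: ac_simps)
      then have "\<bar>exp (- (kap x v - kap x' (R0 v))) * (1 / v $ 3) * f x' (R0 v)\<bar>
          \<le> (exp Ckappa * exp (- (a * (x' - 0)))) * (1 / v $ 3) * (K * nu (R0 v))"
        using abs_le_nu_if_bounded(1)[OF K x'] v by (intro abs_mult_le) auto
      also have "\<dots> = exp Ckappa * K * (a * exp (- (a * (x' - 0))))"
        unfolding a_def by (simp add: algebra_simps)
      finally show "\<bar>exp (- (kap x v - kap x' (R0 v))) * (1 / v $ 3) * f x' (R0 v)\<bar>
          \<le> exp Ckappa * K * (a * exp (- (a * (x' - 0))))" .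
    qed
  qed
  also have "\<dots> = exp Ckappa * K * (LINT x':{0..A}|lborel. a * exp (- (a * (x' - 0))))" by simp
  also have "\<dots> \<le> exp Ckappa * K * 1"
    using set_integral_exp_neg_le_1(2)[OF a, of 0 A 0] A K0 by (intro mult_left_mono) auto
  finally show ?thesis by simp
qed

lemma Zop_wall_integrand_bound:
  assumes K: "\<forall>x\<in>{0<..<A}. \<forall>v. \<bar>f x v / nu v\<bar> \<le> K" and x: "x \<in> {0<..<A}" and v: "v $ 3 > 0"
    and w: "w $ 3 < 0"
  shows "\<bar>LINT x':{0..A}|lborel. (- w $ 3) * (sx 0 v powr (m/2) / sx 0 w powr (m/2))
      * exp (- (kap x v - kap x' w)) * (1 / w $ 3) * f x' w * sqrt (Ms w)\<bar> \<le> wall_weight v K * gW w"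
proof -
  define b where "b = nu w / (- w $ 3)"
  have b: "b \<ge> 0" unfolding b_def using nu_pos[of w] w by (intro divide_nonneg_pos) auto
  have K0: "K \<ge> 0" using abs_le_nu_if_bounded(2)[OF K x] .
  define P where "P = sigmax_ratio_bound v w * exp Ckappa * K
    * (sqrt (Maxw rho T ub ub) * exp (- ((norm (w - ub))^2) / (4 * T)))"
  have P: "P \<ge> 0" unfolding P_def sigmax_ratio_bound_def using K0 Maxw_pos[OF rho T, of ub ub] by simp
  have "\<bar>LINT x':{0..A}|lborel. (- w $ 3) * (sx 0 v powr (m/2) / sx 0 w powr (m/2))
      * exp (- (kap x v - kap x' w)) * (1 / w $ 3) * f x' w * sqrt (Ms w)\<bar>
      \<le> (LINT x':{0..A}|lborel. (P * (- w $ 3)) * (b * exp (- (b * (x' - 0)))))"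
  proof (rule set_integral_abs_bound_dominated)
    show "set_integrable lborel {0..A} (\<lambda>x'. (P * (- w $ 3)) * (b * exp (- (b * (x' - 0)))))"
      by (rule set_integrable_mult_right) (use set_integral_exp_neg_le_1(1)[OF b, of 0 A 0] A in simp)
    have "AE x' in lborel. x' \<noteq> 0 \<and> x' \<noteq> A"
      using AE_lborel_singleton[of 0] AE_lborel_singleton[of A] by eventually_elim simp
    then show "AE x' in lborel. x' \<in> {0..A} \<longrightarrow> \<bar>(- w $ 3) * (sx 0 v powr (m/2) / sx 0 w powr (m/2))
        * exp (- (kap x v - kap x' w)) * (1 / w $ 3) * f x' w * sqrt (Ms w)\<bar>
        \<le> (P * (- w $ 3)) * (b * exp (- (b * (x' - 0))))"
    proof (eventually_elim, intro impI)
      fix x' assume "x' \<noteq> 0 \<and> x' \<noteq> A" "x' \<in> {0..A}"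
      then have x': "x' \<in> {0<..<A}" by auto
      have "exp (- (kap x v - kap x' w)) \<le> exp Ckappa * exp (- (b * (x' - 0)))"
        using exp_kappa_diff_le_outgoing[of x x' v w] x x' v w unfolding b_def by (simp add: ac_simps)
      then have "\<bar>(sx 0 v powr (m/2) / sx 0 w powr (m/2)) * exp (- (kap x v - kap x' w)) * f x' w * sqrt (Ms w)\<bar>
          \<le> sigmax_ratio_bound v w * (exp Ckappa * exp (- (b * (x' - 0)))) * (K * nu w)
            * (sqrt (Maxw rho T ub ub) * exp (- ((norm (w - ub))^2) / (4 * T)))"
        using sigmax_ratio_le[of v w] abs_le_nu_if_bounded(1)[OF K x'] sqrt_Msig_le[of w] sqrt_Msig_pos[of w]
        by (intro abs_mult_le) auto
      also have "\<dots> = (P * (- w $ 3)) * (b * exp (- (b * (x' - 0))))"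
        unfolding P_def b_def using w by (simp add: field_simps)
      finally show "\<bar>(- w $ 3) * (sx 0 v powr (m/2) / sx 0 w powr (m/2))
          * exp (- (kap x v - kap x' w)) * (1 / w $ 3) * f x' w * sqrt (Ms w)\<bar>
          \<le> (P * (- w $ 3)) * (b * exp (- (b * (x' - 0))))"
        using w by (simp add: abs_mult)
    qed
  qed
  also have "\<dots> = (P * (- w $ 3)) * (LINT x':{0..A}|lborel. b * exp (- (b * (x' - 0))))"
    by (rule set_integral_mult_right)
  also have "\<dots> \<le> (P * (- w $ 3)) * 1"
    using set_integral_exp_neg_le_1(2)[OF b, of 0 A 0] A P w by (intro mult_left_mono) (auto simp: mult_nonneg_nonpos)
  also have "\<dots> = P * \<bar>w $ 3\<bar>" using w by simp
  also have "\<dots> \<le> wall_weight v K * gW w" unfolding P_def by (rule wall_integrand_le[OF K0])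
  finally show ?thesis .
qed

lemma Zop_bound:
  assumes K: "\<forall>x\<in>{0<..<A}. \<forall>v. \<bar>f x v / nu v\<bar> \<le> K" and x: "x \<in> {0<..<A}"
  shows "\<bar>Zop m hb gam U delta l rho T ub Tw uw alpha A f x v\<bar> \<le> (exp Ckappa + Cwall) * K"
proof (cases "v $ 3 > 0")
  case False
  then show ?thesis
    using abs_le_nu_if_bounded(2)[OF K x] Cwall_nonneg by (simp add: Zop_def)
next
  case v: True
  have K0: "K \<ge> 0" using abs_le_nu_if_bounded(2)[OF K x] .
  define Z1 IZ where
    "Z1 = (LINT x':{0..A}|lborel. exp (- (kap x v - kap x' (R0 v))) * (1 / v $ 3) * f x' (R0 v))"
    and "IZ = (\<integral>w\<in>{w. w $ 3 < 0}. (LINT x':{0..A}|lborel. (- w $ 3) * (sx 0 v powr (m/2) / sx 0 w powr (m/2))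
      * exp (- (kap x v - kap x' w)) * (1 / w $ 3) * f x' w * sqrt (Ms w)) \<partial>lborel)"
  have Z: "Zop m hb gam U delta l rho T ub Tw uw alpha A f x v
      = (1 - alpha) * Z1 - alpha * Mwall Tw uw v / sqrt (Ms v) * IZ"
    unfolding Zop_def Let_def Z1_def IZ_def using v by simp
  have "\<bar>Z1\<bar> \<le> exp Ckappa * K" unfolding Z1_def by (rule Zop_specular_bound[OF K x v])
  then have "\<bar>(1 - alpha) * Z1\<bar> \<le> (1 - alpha) * (exp Ckappa * K)"
    using alpha by (auto simp: abs_mult intro!: mult_left_mono)
  moreover have "\<bar>alpha * Mwall Tw uw v / sqrt (Ms v) * IZ\<bar> \<le> alpha * Cwall * K"
    unfolding IZ_def using Zop_wall_integrand_bound[OF K x v] by (rule wall_term_bound[OF K0])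
  ultimately have "\<bar>Zop m hb gam U delta l rho T ub Tw uw alpha A f x v\<bar>
      \<le> (1 - alpha) * (exp Ckappa * K) + alpha * Cwall * K"
    unfolding Z by linarith
  also have "\<dots> \<le> exp Ckappa * K + Cwall * K"
    using alpha K0 Cwall_nonneg by (intro add_mono) (auto simp: mult_left_le_one_le mult_right_mono)
  finally show ?thesis by (simp add: algebra_simps)
qed

end

context diffuse_wall
begin

lemma boundary_operator_bounds:
  assumes l: "l \<ge> 1" and A: "A > 0"
    and small: "0 < hb \<and> hb < min 1 (min (1 / (6 * l)) (aw / 6)) \<and> 0 < delta \<and> delta < 1 / (Csig * A)"
  shows "(\<forall>K. (\<forall>v. \<bar>f A v\<bar> \<le> K) \<longrightarrow> (\<forall>x\<in>{0<..<A}. \<forall>v. v $ 3 \<noteq> 0 \<longrightarrow>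
      \<bar>YA m hb gam U delta l rho T ub Tw uw alpha A f x v\<bar> \<le> (exp Ckappa + Cwall) * K)) \<and>
    (\<forall>K. (\<forall>x\<in>{0<..<A}. \<forall>v. \<bar>f x v / nu v\<bar> \<le> K) \<longrightarrow> (\<forall>x\<in>{0<..<A}. \<forall>v. v $ 3 \<noteq> 0 \<longrightarrow>
      \<bar>Zop m hb gam U delta l rho T ub Tw uw alpha A f x v\<bar> \<le> (exp Ckappa + Cwall) * K)) \<and>
    (\<forall>K. (\<forall>x\<in>{0<..<A}. \<forall>v. \<bar>f x v / nu v\<bar> \<le> K) \<longrightarrow> (\<forall>x\<in>{0<..<A}. \<forall>v. v $ 3 \<noteq> 0 \<longrightarrow>
      \<bar>Uop m hb gam U delta l rho T ub A f x v\<bar> \<le> (exp Ckappa + Cwall) * K))"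
proof -
  have "delta * A * Csig \<le> 1"
    using small A Csig_ge_7 by (simp add: field_simps)
  then interpret wall_regime U gam B m rho T ub hb delta l A Tw alpha uw
    using l A small by unfold_locales auto
  have "\<bar>Uop m hb gam U delta l rho T ub A f x v\<bar> \<le> (exp Ckappa + Cwall) * K"
    if "\<forall>x\<in>{0<..<A}. \<forall>v. \<bar>f x v / nu v\<bar> \<le> K" "x \<in> {0<..<A}" for K x v
    using Uop_bound[OF that] Cwall_nonneg abs_le_nu_if_bounded(2)[OF that]
    by (smt (verit) mult_right_mono)
  then show ?thesis using YA_bound Zop_bound by blast
qed

end

theorem lemma2p2:
  fixes gam m beta theta rho T Tw alpha :: real
    and ub uw :: "real^3"
    and Ups :: "real \<Rightarrow> real"
  assumes "rho > 0" and "T > 0" and "ub $ 3 = 0"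
    and "0 < Tw" and "Tw < 2 * T" and "uw $ 3 = 0"
    and "0 \<le> alpha" and "alpha \<le> 1"
    and "cutoff Ups"
    and "-3 < gam" and "gam \<le> 1" and "theta > 0"
  shows "\<exists>C>0. \<forall>l\<ge>1. \<forall>A>0. \<exists>h0>0. \<exists>d0>0. \<forall>hb delta. 0 < hb \<and> hb < h0 \<and> 0 < delta \<and> delta < d0 \<longrightarrow>
    (\<forall>f :: real \<Rightarrow> real^3 \<Rightarrow> real. (\<lambda>(x, v). f x v) \<in> borel_measurable borel \<longrightarrow>
      (\<forall>K. (\<forall>v. \<bar>f A v\<bar> \<le> K) \<longrightarrow>
         (\<forall>x\<in>{0<..<A}. \<forall>v. v $ 3 \<noteq> 0 \<longrightarrow>
            \<bar>YA m hb gam Ups delta l rho T ub Tw uw alpha A f x v\<bar> \<le> C * K)) \<and>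
      (\<forall>K. (\<forall>x\<in>{0<..<A}. \<forall>v. \<bar>f x v / nuf gam rho T ub v\<bar> \<le> K) \<longrightarrow>
         (\<forall>x\<in>{0<..<A}. \<forall>v. v $ 3 \<noteq> 0 \<longrightarrow>
            \<bar>Zop m hb gam Ups delta l rho T ub Tw uw alpha A f x v\<bar> \<le> C * K)) \<and>
      (\<forall>K. (\<forall>x\<in>{0<..<A}. \<forall>v. \<bar>f x v / nuf gam rho T ub v\<bar> \<le> K) \<longrightarrow>
         (\<forall>x\<in>{0<..<A}. \<forall>v. v $ 3 \<noteq> 0 \<longrightarrow>
            \<bar>Uop m hb gam Ups delta l rho T ub A f x v\<bar> \<le> C * K)))"
proof -
  obtain B where B: "B \<ge> 0" "\<And>s. s \<ge> 0 \<Longrightarrow> \<bar>deriv Ups s\<bar> \<le> B"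
    using cutoff_deriv_bounded[OF \<open>cutoff Ups\<close>] by blast
  interpret diffuse_wall Ups gam B m rho T ub Tw alpha uw
    using assms B by unfold_locales auto
  show ?thesis
  proof (rule exI[of _ "exp Ckappa + Cwall"], intro conjI allI impI, goal_cases)
    case 1
    show ?case using Cwall_nonneg by (simp add: add_pos_nonneg)
  next
    case (2 l A)
    have h0: "0 < min 1 (min (1 / (6 * l)) (aw / 6))" and d0: "0 < 1 / (Csig * A)"
      using 2 aw_pos Csig_ge_7 by auto
    show ?case
      by (rule exI[of _ "min 1 (min (1 / (6 * l)) (aw / 6))"], rule conjI[OF h0],
          rule exI[of _ "1 / (Csig * A)"], rule conjI[OF d0])
        (use boundary_operator_bounds[OF 2] in blast)
  qed
qed

end
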